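(* Let $E$ be a row-finite graph with a fixed choice of special edges. Let $R$ be a complete set of representatives of the $\sim_\infty$-equivalence classes of $X^\infty$ and $S$ a complete set of representatives of the $\sim_c$-equivalence classes of $X^c$. Then $\{(F_v,\phi_v),(F_x,\phi_x),(F_y,\phi_y)\mid v\in E^0,\ x\in R,\ y\in S\}$ is a complete set of representatives (each isomorphism class represented exactly once) for the isomorphism classes of nonempty connected extended representation graphs for $E$.
   Context: $E=(E^0,E^1,s,r)$ is a row-finite directed graph; a vertex is regular if it emits an edge; for each regular $v$ a fixed edge $e^v\in s^{-1}(v)$ is called special, all other edges nonspecial. Paths of length $n\ge1$ are words $y_1\dots y_n$ of edges with $r(y_i)=s(y_{i+1})$; paths of length $0$ are vertices ($s(v)=r(v)=v$). The double graph $E_d$ has vertices $E^0$ and edges $e$ (real) and $e^*$ (ghost) for $e\in E^1$, with $s_d(e)=s(e),r_d(e)=r(e),s_d(e^* )=r(e),r_d(e^* )=s(e)$. For $p=e_1\dots e_n$ set $p^*=e_n^*\dots e_1^*$. The set $X$ of (finite) basis paths consists of the paths in $E_d$: vertices; $p,p^*$ for paths $p$ of length $\ge1$ in $E$; $pq^*$ with $p=e_1\dots e_k,q=f_1\dots f_n$ of length $\ge1$ in $E$, $r(p)=r(q)$, and $e_k\ne f_n$ or $e_k=f_n$ nonspecial. $X_v=\{x\in X: s_d(x)=v\}$. $X^\infty$: left-infinite words $x=\dots x_3x_2x_1$ of edges of $E_d$ such that each $x_n\dots x_1$ is a basis path. $x\sim_\infty z$ iff there are $m,n\ge0$ with $\dots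 x_{m+2}x_{m+1}=\dots z_{n+2}z_{n+1}$. $X^c$: closed paths of length $\ge1$ in $E_d$ consisting only of real edges or only of ghost edges (equivalently finite basis paths $x$ with $x^2$ a basis path). $x_1\dots x_m\sim_c y_1\dots y_n$ iff $x_1\dots x_m=y_{k+1}\dots y_ny_1\dots y_k$ for some $1\le k\le n$. An extended representation graph for $E$ is a pair $(F,\phi)$, $F$ a directed graph, $\phi:F\to E_d$ a graph homomorphism, such that for every $w\in F^0$: (i) $w$ is a source or receives exactly one edge $f_w$; (ii) if $w$ is a source or $\phi(f_w)$ is a nonspecial real edge, $\phi$ maps $s^{-1}(w)$ bijectively onto $s_d^{-1}(\phi(w))$; (iii) if $\phi(f_w)$ is a special real edge, $\phi$ maps $s^{-1}(w)$ bijectively onto $s_d^{-1}(\phi(w))\setminus\{\phi(f_w)^*\}$; (iv) if $\phi(f_w)$ is a ghost edge, $\phi$ maps $s^{-1}(w)$ bijectively onto the ghost edges in $s_d^{-1}(\phi(w))$. An isomorphism $(F,\phi)\to(G,\psi)$ is a graph isomorphism $\alpha$ with $\psi\circ\alpha=\phi$. $F$ is connected if any two vertices are joined by a path when edge directions are ignored; nonempty if $F^0\ne\emptyset$. $(F_v,\phi_v)$ for $v\in E^0$: vertices $w_x$ ($x\in X_v$), edges $f_x$ ($x\in X_v\setminus\{v\}$) from $w_{x'}$ to $w_x$ where $x'$ is $x$ with its last edge removed ($x'=v$ if $|x|=1$); $\phi_v(w_x)=r_d(x)$, $\phi_v(f_x)=$ last edge of $x$. $(F_x,\phi_x)$ for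 $x=\dots x_2x_1\in X^\infty$: for $i\in\mathbb N$, $X_i$ = basis paths $y=y_1\dots y_n$, $n\ge1$, with $x_iy_1$ a basis path and $y_1\ne x_{i-1}$ if $i\ge2$. Vertices $w_i$ ($i\in\mathbb N$), $w_{i,y}$ ($y\in X_i$); edges $f_i$ from $w_{i+1}$ to $w_i$, and $f_{i,y}$ to $w_{i,y}$ from $w_i$ if $|y|=1$, from $w_{i,y_1\dots y_{n-1}}$ if $n\ge2$; $\phi_x(w_i)=r_d(x_i)$, $\phi_x(w_{i,y})=r_d(y)$, $\phi_x(f_i)=x_i$, $\phi_x(f_{i,y})=$ last edge of $y$. $(F_x,\phi_x)$ for $x=x_1\dots x_m\in X^c$: for $1\le i\le m$, $X_i$ = basis paths $y=y_1\dots y_n$, $n\ge1$, with $x_iy_1$ a basis path and $y_1\ne x_{i+1}$ ($x_{m+1}=x_1$). Vertices $w_i$ ($1\le i\le m$), $w_{i,y}$ ($y\in X_i$); edges $f_i$ from $w_{i-1}$ to $w_i$ ($w_0=w_m$), and $f_{i,y}$ as before; $\phi_x$ defined by the same formulas. *)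

theory Defs
  imports Main
begin

record ('a,'b) egraph =
  V0 :: "'a set"
  V1 :: "'b set"
  esrc :: "'b \<Rightarrow> 'a"
  erng :: "'b \<Rightarrow> 'a"

definition egraph_wf :: "('a,'b) egraph \<Rightarrow> bool" where
  "egraph_wf E \<longleftrightarrow> (\<forall>e\<in>V1 E. esrc E e \<in> V0 E \<and> erng E e \<in> V0 E)"

definition row_finite :: "('a,'b) egraph \<Rightarrow> bool" where
  "row_finite E \<longleftrightarrow> (\<forall>v\<in>V0 E. finite {e\<in>V1 E. esrc E e = v})"

definition regular :: "('a,'b) egraph \<Rightarrow> 'a \<Rightarrow> bool" where
  "regular E v \<longleftrightarrow> (\<exists>e\<in>V1 E. esrc E e = v)"

definition special_choice :: "('a,'b) egraph \<Rightarrow> ('a \<Rightarrow> 'b) \<Rightarrow> bool" where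
  "special_choice E sp \<longleftrightarrow>
     (\<forall>v\<in>V0 E. regular E v \<longrightarrow> sp v \<in> V1 E \<and> esrc E (sp v) = v)"

definition special :: "('a,'b) egraph \<Rightarrow> ('a \<Rightarrow> 'b) \<Rightarrow> 'b \<Rightarrow> bool" where
  "special E sp e \<longleftrightarrow> e \<in> V1 E \<and> e = sp (esrc E e)"

text \<open>Edges of the double graph: real edges e and ghost edges e*.\<close>
datatype 'b dedge = Real 'b | Ghost 'b

fun dsrc :: "('a,'b) egraph \<Rightarrow> 'b dedge \<Rightarrow> 'a" where
  "dsrc E (Real e) = esrc E e"
| "dsrc E (Ghost e) = erng E e"

fun drng :: "('a,'b) egraph \<Rightarrow> 'b dedge \<Rightarrow> 'a" where
  "drng E (Real e) = erng E e"
| "drng E (Ghost e) = esrc E e"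

definition dedges :: "('a,'b) egraph \<Rightarrow> 'b dedge set" where
  "dedges E = Real ` V1 E \<union> Ghost ` V1 E"

definition epath :: "('a,'b) egraph \<Rightarrow> 'b list \<Rightarrow> bool" where
  "epath E p \<longleftrightarrow> p \<noteq> [] \<and> set p \<subseteq> V1 E \<and> successively (\<lambda>e f. erng E e = esrc E f) p"

definition dpath :: "('a,'b) egraph \<Rightarrow> 'b dedge list \<Rightarrow> bool" where
  "dpath E p \<longleftrightarrow> p \<noteq> [] \<and> set p \<subseteq> dedges E \<and> successively (\<lambda>a b. drng E a = dsrc E b) p"

definition gstar :: "'b list \<Rightarrow> 'b dedge list" where
  "gstar q = map Ghost (rev q)"

definition basis_word :: "('a,'b) egraph \<Rightarrow> ('a \<Rightarrow> 'b) \<Rightarrow> 'b dedge list \<Rightarrow> bool" where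
  "basis_word E sp w \<longleftrightarrow>
     (\<exists>p. epath E p \<and> w = map Real p) \<or>
     (\<exists>p. epath E p \<and> w = gstar p) \<or>
     (\<exists>p q. epath E p \<and> epath E q \<and> erng E (last p) = erng E (last q) \<and>
            (last p \<noteq> last q \<or> \<not> special E sp (last p)) \<and> w = map Real p @ gstar q)"

text \<open>The set X of basis paths; a basis path is represented by its source vertex
  together with its word of edges (empty word = the vertex itself).\<close>
definition basis_paths :: "('a,'b) egraph \<Rightarrow> ('a \<Rightarrow> 'b) \<Rightarrow> ('a \<times> 'b dedge list) set" where
  "basis_paths E sp = {(v, []) | v. v \<in> V0 E} \<union> {(dsrc E (hd w), w) | w. basis_word E sp w}"

definition Xv :: "('a,'b) egraph \<Rightarrow> ('a \<Rightarrow> 'b) \<Rightarrow> 'a \<Rightarrow> ('a \<times> 'b dedge list) set" where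
  "Xv E sp v = {x \<in> basis_paths E sp. fst x = v}"

definition bp_rng :: "('a,'b) egraph \<Rightarrow> ('a \<times> 'b dedge list) \<Rightarrow> 'a" where
  "bp_rng E x = (if snd x = [] then fst x else drng E (last (snd x)))"

text \<open>Left-infinite words ... x_3 x_2 x_1 are encoded as functions x with
  x 0 = x_1, x 1 = x_2, etc.; x_n ... x_1 is the list [x (n-1), ..., x 0].\<close>
definition Xinf :: "('a,'b) egraph \<Rightarrow> ('a \<Rightarrow> 'b) \<Rightarrow> (nat \<Rightarrow> 'b dedge) set" where
  "Xinf E sp = {x. \<forall>n\<ge>1. basis_word E sp (map x (rev [0..<n]))}"

definition inf_equiv :: "(nat \<Rightarrow> 'b dedge) \<Rightarrow> (nat \<Rightarrow> 'b dedge) \<Rightarrow> bool" where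
  "inf_equiv x z \<longleftrightarrow> (\<exists>m n. \<forall>k. x (m + k) = z (n + k))"

definition Xc :: "('a,'b) egraph \<Rightarrow> 'b dedge list set" where
  "Xc E = {x. dpath E x \<and> dsrc E (hd x) = drng E (last x) \<and>
              ((\<exists>p. x = map Real p) \<or> (\<exists>p. x = map Ghost p))}"

definition cyc_equiv :: "'b dedge list \<Rightarrow> 'b dedge list \<Rightarrow> bool" where
  "cyc_equiv x y \<longleftrightarrow> (\<exists>k. 1 \<le> k \<and> k \<le> length y \<and> x = drop k y @ take k y)"

record ('v,'e) dgraph =
  verts :: "'v set"
  arcs :: "'e set"
  tail :: "'e \<Rightarrow> 'v"
  head :: "'e \<Rightarrow> 'v"

definition in_arcs :: "('v,'e) dgraph \<Rightarrow> 'v \<Rightarrow> 'e set" where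
  "in_arcs F w = {f \<in> arcs F. head F f = w}"

definition out_arcs :: "('v,'e) dgraph \<Rightarrow> 'v \<Rightarrow> 'e set" where
  "out_arcs F w = {f \<in> arcs F. tail F f = w}"

definition dgraph_wf :: "('v,'e) dgraph \<Rightarrow> bool" where
  "dgraph_wf F \<longleftrightarrow> (\<forall>f\<in>arcs F. tail F f \<in> verts F \<and> head F f \<in> verts F)"

definition dhom :: "('a,'b) egraph \<Rightarrow> ('v,'e) dgraph \<Rightarrow> ('v \<Rightarrow> 'a) \<Rightarrow> ('e \<Rightarrow> 'b dedge) \<Rightarrow> bool" where
  "dhom E F phiV phiA \<longleftrightarrow>
     (\<forall>w\<in>verts F. phiV w \<in> V0 E) \<and>
     (\<forall>f\<in>arcs F. phiA f \<in> dedges E \<and> dsrc E (phiA f) = phiV (tail F f) \<and>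
                  drng E (phiA f) = phiV (head F f))"

definition ext_rep_graph ::
  "('a,'b) egraph \<Rightarrow> ('a \<Rightarrow> 'b) \<Rightarrow> ('v,'e) dgraph \<Rightarrow> ('v \<Rightarrow> 'a) \<Rightarrow> ('e \<Rightarrow> 'b dedge) \<Rightarrow> bool" where
  "ext_rep_graph E sp F phiV phiA \<longleftrightarrow>
     dgraph_wf F \<and> dhom E F phiV phiA \<and>
     (\<forall>w\<in>verts F.
        (in_arcs F w = {} \<or> (\<exists>f. in_arcs F w = {f})) \<and>
        ((in_arcs F w = {} \<or> (\<exists>f e. in_arcs F w = {f} \<and> phiA f = Real e \<and> \<not> special E sp e)) \<longrightarrow>
           bij_betw phiA (out_arcs F w) {d \<in> dedges E. dsrc E d = phiV w}) \<and>
        (\<forall>f e. in_arcs F w = {f} \<and> phiA f = Real e \<and> special E sp e \<longrightarrow>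
           bij_betw phiA (out_arcs F w) ({d \<in> dedges E. dsrc E d = phiV w} - {Ghost e})) \<and>
        (\<forall>f e. in_arcs F w = {f} \<and> phiA f = Ghost e \<longrightarrow>
           bij_betw phiA (out_arcs F w) {Ghost e' | e'. e' \<in> V1 E \<and> dsrc E (Ghost e') = phiV w}))"

definition dg_connected :: "('v,'e) dgraph \<Rightarrow> bool" where
  "dg_connected F \<longleftrightarrow>
     (\<forall>u\<in>verts F. \<forall>v\<in>verts F.
        (u, v) \<in> ({(tail F f, head F f) | f. f \<in> arcs F} \<union> {(head F f, tail F f) | f. f \<in> arcs F})\<^sup>*)"

definition ne_conn_erg ::
  "('a,'b) egraph \<Rightarrow> ('a \<Rightarrow> 'b) \<Rightarrow> ('v,'e) dgraph \<Rightarrow> ('v \<Rightarrow> 'a) \<Rightarrow> ('e \<Rightarrow> 'b dedge) \<Rightarrow> bool" where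
  "ne_conn_erg E sp F phiV phiA \<longleftrightarrow>
     ext_rep_graph E sp F phiV phiA \<and> dg_connected F \<and> verts F \<noteq> {}"

definition rep_iso ::
  "('v1,'e1) dgraph \<Rightarrow> ('v1 \<Rightarrow> 'a) \<Rightarrow> ('e1 \<Rightarrow> 'c) \<Rightarrow>
   ('v2,'e2) dgraph \<Rightarrow> ('v2 \<Rightarrow> 'a) \<Rightarrow> ('e2 \<Rightarrow> 'c) \<Rightarrow> bool" where
  "rep_iso F phiV phiA G psiV psiA \<longleftrightarrow>
     (\<exists>aV aA. bij_betw aV (verts F) (verts G) \<and> bij_betw aA (arcs F) (arcs G) \<and>
        (\<forall>f\<in>arcs F. tail G (aA f) = aV (tail F f) \<and> head G (aA f) = aV (head F f)) \<and>
        (\<forall>w\<in>verts F. psiV (aV w) = phiV w) \<and>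
        (\<forall>f\<in>arcs F. psiA (aA f) = phiA f))"

text \<open>F_v: vertex w_x and edge f_x are both encoded by the basis path x.\<close>
definition Fv :: "('a,'b) egraph \<Rightarrow> ('a \<Rightarrow> 'b) \<Rightarrow> 'a \<Rightarrow>
                  ('a \<times> 'b dedge list, 'a \<times> 'b dedge list) dgraph" where
  "Fv E sp v = \<lparr> verts = Xv E sp v, arcs = {x \<in> Xv E sp v. snd x \<noteq> []},
                 tail = (\<lambda>x. (fst x, butlast (snd x))), head = (\<lambda>x. x) \<rparr>"

definition Fv_phiV :: "('a,'b) egraph \<Rightarrow> ('a \<times> 'b dedge list) \<Rightarrow> 'a" where
  "Fv_phiV E = bp_rng E"

definition Fv_phiA :: "('a \<times> 'b dedge list) \<Rightarrow> 'b dedge" where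
  "Fv_phiA x = last (snd x)"

text \<open>F_x for x in X^infty (0-indexed: index i stands for the paper's i+1).
  Vertex (i,[]) is w_i, vertex (i,y) with y nonempty is w_{i,y}; the edge (i,[]) is
  f_i and the edge (i,y) is f_{i,y}.\<close>
definition Xi_inf :: "('a,'b) egraph \<Rightarrow> ('a \<Rightarrow> 'b) \<Rightarrow> (nat \<Rightarrow> 'b dedge) \<Rightarrow> nat \<Rightarrow> 'b dedge list set" where
  "Xi_inf E sp x i = {y. basis_word E sp y \<and> basis_word E sp [x i, hd y] \<and>
                         (0 < i \<longrightarrow> hd y \<noteq> x (i - 1))}"

definition Finf :: "('a,'b) egraph \<Rightarrow> ('a \<Rightarrow> 'b) \<Rightarrow> (nat \<Rightarrow> 'b dedge) \<Rightarrow>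
                    (nat \<times> 'b dedge list, nat \<times> 'b dedge list) dgraph" where
  "Finf E sp x =
     \<lparr> verts = {(i, []) | i. True} \<union> {(i, y) | i y. y \<in> Xi_inf E sp x i},
       arcs = {(i, []) | i. True} \<union> {(i, y) | i y. y \<in> Xi_inf E sp x i},
       tail = (\<lambda>(i, y). if y = [] then (Suc i, []) else (i, butlast y)),
       head = (\<lambda>p. p) \<rparr>"

definition Finf_phiV :: "('a,'b) egraph \<Rightarrow> (nat \<Rightarrow> 'b dedge) \<Rightarrow> nat \<times> 'b dedge list \<Rightarrow> 'a" where
  "Finf_phiV E x = (\<lambda>(i, y). if y = [] then drng E (x i) else drng E (last y))"

definition Finf_phiA :: "(nat \<Rightarrow> 'b dedge) \<Rightarrow> nat \<times> 'b dedge list \<Rightarrow> 'b dedge" where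
  "Finf_phiA x = (\<lambda>(i, y). if y = [] then x i else last y)"

text \<open>F_x for x = x_1...x_m in X^c (0-indexed: position i stands for the paper's i+1).\<close>
definition Xi_c :: "('a,'b) egraph \<Rightarrow> ('a \<Rightarrow> 'b) \<Rightarrow> 'b dedge list \<Rightarrow> nat \<Rightarrow> 'b dedge list set" where
  "Xi_c E sp x i = {y. basis_word E sp y \<and> basis_word E sp [x ! i, hd y] \<and>
                       hd y \<noteq> x ! (Suc i mod length x)}"

definition Fc :: "('a,'b) egraph \<Rightarrow> ('a \<Rightarrow> 'b) \<Rightarrow> 'b dedge list \<Rightarrow>
                  (nat \<times> 'b dedge list, nat \<times> 'b dedge list) dgraph" where
  "Fc E sp x =
     \<lparr> verts = {(i, []) | i. i < length x} \<union> {(i, y) | i y. i < length x \<and> y \<in> Xi_c E sp x i},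
       arcs = {(i, []) | i. i < length x} \<union> {(i, y) | i y. i < length x \<and> y \<in> Xi_c E sp x i},
       tail = (\<lambda>(i, y). if y = [] then ((i + length x - 1) mod length x, []) else (i, butlast y)),
       head = (\<lambda>p. p) \<rparr>"

definition Fc_phiV :: "('a,'b) egraph \<Rightarrow> 'b dedge list \<Rightarrow> nat \<times> 'b dedge list \<Rightarrow> 'a" where
  "Fc_phiV E x = (\<lambda>(i, y). if y = [] then drng E (x ! i) else drng E (last y))"

definition Fc_phiA :: "'b dedge list \<Rightarrow> nat \<times> 'b dedge list \<Rightarrow> 'b dedge" where
  "Fc_phiA x = (\<lambda>(i, y). if y = [] then x ! i else last y)"

end

theory Submission
  imports Defs
begin

(* In an extended representation graph every vertex has at most one in-arc, and the labels of
   its out-arcs are exactly the edges that continue the label of its in-arc to a basis path.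
   Following in-arcs backwards from a vertex of a connected such graph F therefore either stops
   at a source r, or runs along an injective ray, or closes up into a cycle.  In the first case
   every vertex is reached from r along a unique path, whose labels form a basis path starting
   at phi(r); this identifies F with F_phi(r).  In the other two cases the ray (resp. cycle) is a
   spine labelled by some x in X^infty (resp. y in X^c), every vertex hangs off the spine by a
   unique branch, and F is identified with F_x (resp. F_y); replacing x, y by their
   representatives only shifts (resp. rotates) the spine.  Conversely the models are told apart
   by the existence of a source and by the behaviour of backward walks, and isomorphic models
   have equivalent words. *)

section \<open>Basis paths as admissible chains\<close>

definition adm_pair :: "('a,'b) egraph \<Rightarrow> ('a \<Rightarrow> 'b) \<Rightarrow> 'b dedge \<Rightarrow> 'b dedge \<Rightarrow> bool" where
  "adm_pair E sp c d \<longleftrightarrow> c \<in> dedges E \<and> d \<in> dedges E \<and> drng E c = dsrc E d \<and>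
     (case (c, d) of (Real e, Real f) \<Rightarrow> True | (Ghost e, Ghost f) \<Rightarrow> True
        | (Real e, Ghost f) \<Rightarrow> \<not> (e = f \<and> special E sp e) | (Ghost e, Real f) \<Rightarrow> False)"

definition adm_chain :: "('a,'b) egraph \<Rightarrow> ('a \<Rightarrow> 'b) \<Rightarrow> 'b dedge list \<Rightarrow> bool" where
  "adm_chain E sp w \<longleftrightarrow> w \<noteq> [] \<and> set w \<subseteq> dedges E \<and> successively (adm_pair E sp) w"

lemma epath_Cons:
  "epath E (e # p) \<longleftrightarrow> e \<in> V1 E \<and> (p = [] \<or> epath E p \<and> erng E e = esrc E (hd p))"
  unfolding epath_def by (auto simp: successively_Cons)

lemma epath_snoc:
  "epath E (p @ [e]) \<longleftrightarrow> e \<in> V1 E \<and> (p = [] \<or> epath E p \<and> erng E (last p) = esrc E e)"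
  unfolding epath_def by (auto simp: successively_append_iff)

lemma basis_word_imp_adm_chain: "basis_word E sp w \<Longrightarrow> adm_chain E sp w"
proof -
  assume "basis_word E sp w"
  then consider (real) p where "epath E p" "w = map Real p"
    | (ghost) p where "epath E p" "w = gstar p"
    | (mixed) p q where "epath E p" "epath E q" "erng E (last p) = erng E (last q)"
        "last p \<noteq> last q \<or> \<not> special E sp (last p)" "w = map Real p @ gstar q"
    unfolding basis_word_def by blast
  then show ?thesis
  proof cases
    case mixed
    moreover from this have "last p \<in> V1 E" "last q \<in> V1 E" by (auto simp: epath_def)
    ultimately show ?thesis unfolding adm_chain_def epath_def dedges_def gstar_def
      by (auto simp: successively_map successively_append_iff adm_pair_def dedges_def last_map hd_map hd_rev
          elim!: successively_mono)
  qed (auto simp: adm_chain_def epath_def gstar_def successively_map adm_pair_def dedges_def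
        elim!: successively_mono)
qed

lemma adm_chain_imp_basis_word: "adm_chain E sp w \<Longrightarrow> basis_word E sp w"
proof (induction w)
  case Nil
  then show ?case by (simp add: adm_chain_def)
next
  case (Cons c w)
  show ?case
  proof (cases "w = []")
    case True
    then have "c \<in> dedges E" using Cons.prems by (simp add: adm_chain_def)
    then obtain e where "e \<in> V1 E" "c = Real e \<or> c = Ghost e" unfolding dedges_def by blast
    then show ?thesis using True unfolding basis_word_def
      by (elim disjE) (auto simp: epath_def gstar_def intro!: exI[of _ "[e]"])
  next
    case False
    have pair: "adm_pair E sp c (hd w)" and "adm_chain E sp w"
      using Cons.prems False by (auto simp: adm_chain_def successively_Cons)
    then have "basis_word E sp w" using Cons.IH by blast
    then consider (real) p where "epath E p" "w = map Real p"
      | (ghost) p where "epath E p" "w = gstar p"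
      | (mixed) p q where "epath E p" "epath E q" "erng E (last p) = erng E (last q)"
          "last p \<noteq> last q \<or> \<not> special E sp (last p)" "w = map Real p @ gstar q"
      unfolding basis_word_def by blast
    then show ?thesis
    proof cases
      case real
      then obtain e where "c = Real e" "p \<noteq> []" using pair False
        by (cases c; cases p) (auto simp: adm_pair_def epath_def)
      moreover from this have "epath E (e # p)" using real pair
        by (cases p) (auto simp: epath_Cons adm_pair_def dedges_def)
      ultimately show ?thesis unfolding basis_word_def using real by (auto intro!: exI[of _ "e # p"])
    next
      case ghost
      then have "p \<noteq> []" by (auto simp: epath_def)
      then have hd_w: "hd w = Ghost (last p)" using ghost by (simp add: gstar_def hd_map hd_rev)
      show ?thesis
      proof (cases c)
        case (Real e)
        then have "epath E [e]" "erng E e = erng E (last p)" "last p \<noteq> e \<or> \<not> special E sp e"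
          using pair hd_w by (auto simp: epath_def adm_pair_def dedges_def)
        then show ?thesis unfolding basis_word_def using ghost Real
          by (intro disjI2) (rule exI[of _ "[e]"], rule exI[of _ p], auto)
      next
        case (Ghost e)
        then have "epath E (p @ [e])" "c # w = gstar (p @ [e])"
          using pair hd_w ghost \<open>p \<noteq> []\<close> by (auto simp: epath_snoc adm_pair_def dedges_def gstar_def)
        then show ?thesis unfolding basis_word_def by blast
      qed
    next
      case mixed
      then have "p \<noteq> []" by (auto simp: epath_def)
      then obtain e where "c = Real e" using pair mixed by (cases c; cases p) (auto simp: adm_pair_def)
      moreover from this have "epath E (e # p)" using mixed pair \<open>p \<noteq> []\<close>
        by (cases p) (auto simp: epath_Cons adm_pair_def dedges_def)
      ultimately show ?thesis unfolding basis_word_def using mixed \<open>p \<noteq> []\<close>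
        by (intro disjI2) (rule exI[of _ "e # p"], rule exI[of _ q], auto)
    qed
  qed
qed

lemma basis_word_iff_adm_chain: "basis_word E sp w \<longleftrightarrow> adm_chain E sp w"
  using basis_word_imp_adm_chain adm_chain_imp_basis_word by blast

lemma basis_word_not_Nil: "basis_word E sp w \<Longrightarrow> w \<noteq> []"
  by (simp add: basis_word_iff_adm_chain adm_chain_def)

lemma basis_word_singleton: "basis_word E sp [c] \<longleftrightarrow> c \<in> dedges E"
  by (simp add: basis_word_iff_adm_chain adm_chain_def)

lemma basis_word_pair: "basis_word E sp [c, d] \<longleftrightarrow> adm_pair E sp c d"
  by (auto simp: basis_word_iff_adm_chain adm_chain_def adm_pair_def)

lemma basis_word_pairD:
  "basis_word E sp [c, d] \<Longrightarrow> c \<in> dedges E \<and> d \<in> dedges E \<and> drng E c = dsrc E d"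
  by (simp add: basis_word_pair adm_pair_def)

lemma basis_word_snoc: "basis_word E sp (w @ [d]) \<longleftrightarrow>
   (w = [] \<and> d \<in> dedges E) \<or> (w \<noteq> [] \<and> basis_word E sp w \<and> basis_word E sp [last w, d])"
  by (auto simp: basis_word_iff_adm_chain adm_chain_def successively_append_iff basis_word_pair adm_pair_def)

lemma basis_word_Cons: "basis_word E sp (c # w) \<longleftrightarrow>
   (w = [] \<and> c \<in> dedges E) \<or> (w \<noteq> [] \<and> basis_word E sp w \<and> basis_word E sp [c, hd w])"
  by (auto simp: basis_word_iff_adm_chain adm_chain_def successively_Cons basis_word_pair adm_pair_def)

lemma basis_word_set: "basis_word E sp w \<Longrightarrow> set w \<subseteq> dedges E"
  by (simp add: basis_word_iff_adm_chain adm_chain_def)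

lemma basis_word_butlast:
  "basis_word E sp w \<Longrightarrow> butlast w \<noteq> [] \<Longrightarrow> basis_word E sp (butlast w)"
  by (metis append_butlast_last_id basis_word_not_Nil basis_word_snoc)

lemma dedges_verts: "egraph_wf E \<Longrightarrow> d \<in> dedges E \<Longrightarrow> dsrc E d \<in> V0 E \<and> drng E d \<in> V0 E"
  unfolding egraph_wf_def dedges_def by auto

section \<open>Extended representation graphs\<close>

text \<open>Conditions (ii)--(iv) on a vertex w say precisely that phiA maps the out-arcs of w
  bijectively onto out_labels w, the edges d at phiV w extending the label of the in-arc of w
  to a basis path.\<close>
definition out_labels ::
  "('a,'b) egraph \<Rightarrow> ('a \<Rightarrow> 'b) \<Rightarrow> ('v,'e) dgraph \<Rightarrow> ('v \<Rightarrow> 'a) \<Rightarrow> ('e \<Rightarrow> 'b dedge) \<Rightarrow> 'v \<Rightarrow> 'b dedge set"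
where
  "out_labels E sp F phiV phiA w =
     {d \<in> dedges E. dsrc E d = phiV w \<and> (\<forall>f\<in>in_arcs F w. basis_word E sp [phiA f, d])}"

lemma continuations_Real_nonspecial:
  "e \<in> V1 E \<Longrightarrow> \<not> special E sp e \<Longrightarrow>
   {d \<in> dedges E. dsrc E d = erng E e \<and> basis_word E sp [Real e, d]} = {d \<in> dedges E. dsrc E d = erng E e}"
  unfolding basis_word_pair adm_pair_def by (rule set_eqI, case_tac x) (auto simp: dedges_def)

lemma continuations_Real_special:
  "e \<in> V1 E \<Longrightarrow> special E sp e \<Longrightarrow>
   {d \<in> dedges E. dsrc E d = erng E e \<and> basis_word E sp [Real e, d]} =
   {d \<in> dedges E. dsrc E d = erng E e} - {Ghost e}"
  unfolding basis_word_pair adm_pair_def by (rule set_eqI, case_tac x) (auto simp: dedges_def)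

lemma continuations_Ghost:
  "e \<in> V1 E \<Longrightarrow>
   {d \<in> dedges E. dsrc E d = esrc E e \<and> basis_word E sp [Ghost e, d]} =
   {Ghost e' | e'. e' \<in> V1 E \<and> dsrc E (Ghost e') = esrc E e}"
  unfolding basis_word_pair adm_pair_def by (rule set_eqI, case_tac x) (auto simp: dedges_def)

lemma vertex_conditions_iff_out_labels:
  assumes hom: "dhom E F phiV phiA"
  shows "((in_arcs F w = {} \<or> (\<exists>f. in_arcs F w = {f})) \<and>
        ((in_arcs F w = {} \<or> (\<exists>f e. in_arcs F w = {f} \<and> phiA f = Real e \<and> \<not> special E sp e)) \<longrightarrow>
           bij_betw phiA (out_arcs F w) {d \<in> dedges E. dsrc E d = phiV w}) \<and>
        (\<forall>f e. in_arcs F w = {f} \<and> phiA f = Real e \<and> special E sp e \<longrightarrow>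
           bij_betw phiA (out_arcs F w) ({d \<in> dedges E. dsrc E d = phiV w} - {Ghost e})) \<and>
        (\<forall>f e. in_arcs F w = {f} \<and> phiA f = Ghost e \<longrightarrow>
           bij_betw phiA (out_arcs F w) {Ghost e' | e'. e' \<in> V1 E \<and> dsrc E (Ghost e') = phiV w}))
      \<longleftrightarrow> (in_arcs F w = {} \<or> (\<exists>f. in_arcs F w = {f})) \<and>
        bij_betw phiA (out_arcs F w) (out_labels E sp F phiV phiA w)"
proof -
  consider (source) "in_arcs F w = {}" | (single) f where "in_arcs F w = {f}"
    | (several) "in_arcs F w \<noteq> {}" "\<nexists>f. in_arcs F w = {f}"
    by blast
  then show ?thesis
  proof cases
    case source
    then show ?thesis by (simp add: out_labels_def)
  next
    case (single f)
    then have "f \<in> arcs F" "head F f = w" by (auto simp: in_arcs_def)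
    then have fd: "phiA f \<in> dedges E" "drng E (phiA f) = phiV w" using hom by (auto simp: dhom_def)
    then obtain e where e: "e \<in> V1 E" "phiA f = Real e \<or> phiA f = Ghost e" by (auto simp: dedges_def)
    have labels: "out_labels E sp F phiV phiA w =
        {d \<in> dedges E. dsrc E d = phiV w \<and> basis_word E sp [phiA f, d]}"
      using single by (simp add: out_labels_def)
    from e(2) show ?thesis
    proof
      assume "phiA f = Real e"
      then show ?thesis
        using continuations_Real_special[OF e(1)] continuations_Real_nonspecial[OF e(1)] single fd labels
        by (cases "special E sp e") auto
    next
      assume "phiA f = Ghost e"
      then show ?thesis using continuations_Ghost[OF e(1), of sp] single fd labels by auto
    qed
  qed blast
qed

lemma ext_rep_graph_iff_out_labels:
  "ext_rep_graph E sp F phiV phiA \<longleftrightarrow> dgraph_wf F \<and> dhom E F phiV phiA \<and>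
     (\<forall>w\<in>verts F. (in_arcs F w = {} \<or> (\<exists>f. in_arcs F w = {f})) \<and>
        bij_betw phiA (out_arcs F w) (out_labels E sp F phiV phiA w))"
proof (cases "dhom E F phiV phiA")
  case True
  then show ?thesis unfolding ext_rep_graph_def by (simp only: vertex_conditions_iff_out_labels)
qed (simp add: ext_rep_graph_def)

locale rep_graph =
  fixes E :: "('a,'b) egraph" and sp :: "'a \<Rightarrow> 'b" and F :: "('v,'e) dgraph"
    and phiV :: "'v \<Rightarrow> 'a" and phiA :: "'e \<Rightarrow> 'b dedge"
  assumes ext_rep_graph: "ext_rep_graph E sp F phiV phiA"
begin

lemma wf: "dgraph_wf F"
  using ext_rep_graph by (simp add: ext_rep_graph_iff_out_labels)

lemma arc:
  "f \<in> arcs F \<Longrightarrow> tail F f \<in> verts F \<and> head F f \<in> verts F \<and> phiA f \<in> dedges E \<and>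
     dsrc E (phiA f) = phiV (tail F f) \<and> drng E (phiA f) = phiV (head F f)"
  using ext_rep_graph by (auto simp: ext_rep_graph_iff_out_labels dgraph_wf_def dhom_def)

lemma phiV_in_V0: "w \<in> verts F \<Longrightarrow> phiV w \<in> V0 E"
  using ext_rep_graph by (auto simp: ext_rep_graph_iff_out_labels dhom_def)

lemma in_arcs_cases: "w \<in> verts F \<Longrightarrow> in_arcs F w = {} \<or> (\<exists>f. in_arcs F w = {f})"
  using ext_rep_graph by (simp add: ext_rep_graph_iff_out_labels)

lemma in_arcs_head: "in_arcs F (head F f) = {f}" if "f \<in> arcs F"
proof -
  have "f \<in> in_arcs F (head F f)" "head F f \<in> verts F" using arc[of f] that by (auto simp: in_arcs_def)
  then show ?thesis using in_arcs_cases[of "head F f"] by auto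
qed

lemma out_arcs_bij: "w \<in> verts F \<Longrightarrow> bij_betw phiA (out_arcs F w) (out_labels E sp F phiV phiA w)"
  using ext_rep_graph by (simp add: ext_rep_graph_iff_out_labels)

lemma out_arcs_label_inj:
  "w \<in> verts F \<Longrightarrow> f \<in> out_arcs F w \<Longrightarrow> g \<in> out_arcs F w \<Longrightarrow> phiA f = phiA g \<Longrightarrow> f = g"
  using out_arcs_bij[of w] by (auto simp: bij_betw_def inj_on_def)

lemma out_arc_labelled:
  "w \<in> verts F \<Longrightarrow> d \<in> out_labels E sp F phiV phiA w \<Longrightarrow> \<exists>g\<in>out_arcs F w. phiA g = d"
  using out_arcs_bij[of w] by (force simp: bij_betw_def)

lemma out_arc_label: "w \<in> verts F \<Longrightarrow> g \<in> out_arcs F w \<Longrightarrow> phiA g \<in> out_labels E sp F phiV phiA w"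
  using out_arcs_bij[of w] by (auto simp: bij_betw_def)

end

lemma rep_iso_trans:
  assumes "rep_iso F phiV phiA G psiV psiA" "rep_iso G psiV psiA H chiV chiA"
  shows "rep_iso F phiV phiA H chiV chiA"
proof -
  obtain aV aA where a: "bij_betw aV (verts F) (verts G)" "bij_betw aA (arcs F) (arcs G)"
    "\<forall>f\<in>arcs F. tail G (aA f) = aV (tail F f) \<and> head G (aA f) = aV (head F f)"
    "\<forall>w\<in>verts F. psiV (aV w) = phiV w" "\<forall>f\<in>arcs F. psiA (aA f) = phiA f"
    using assms(1) unfolding rep_iso_def by blast
  obtain bV bA where b: "bij_betw bV (verts G) (verts H)" "bij_betw bA (arcs G) (arcs H)"
    "\<forall>f\<in>arcs G. tail H (bA f) = bV (tail G f) \<and> head H (bA f) = bV (head G f)"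
    "\<forall>w\<in>verts G. chiV (bV w) = psiV w" "\<forall>f\<in>arcs G. chiA (bA f) = psiA f"
    using assms(2) unfolding rep_iso_def by blast
  have "aA f \<in> arcs G" if "f \<in> arcs F" for f using a(2) that by (auto dest: bij_betwE)
  moreover have "aV w \<in> verts G" if "w \<in> verts F" for w using a(1) that by (auto dest: bij_betwE)
  ultimately show ?thesis unfolding rep_iso_def using a b
    by (intro exI[of _ "bV \<circ> aV"] exI[of _ "bA \<circ> aA"]) (auto intro: bij_betw_trans)
qed

lemma rep_iso_sym:
  assumes iso: "rep_iso F phiV phiA G psiV psiA" and wf: "dgraph_wf F"
  shows "rep_iso G psiV psiA F phiV phiA"
proof -
  obtain aV aA where a: "bij_betw aV (verts F) (verts G)" "bij_betw aA (arcs F) (arcs G)"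
    "\<forall>f\<in>arcs F. tail G (aA f) = aV (tail F f) \<and> head G (aA f) = aV (head F f)"
    "\<forall>w\<in>verts F. psiV (aV w) = phiV w" "\<forall>f\<in>arcs F. psiA (aA f) = phiA f"
    using iso unfolding rep_iso_def by blast
  define bV where "bV = inv_into (verts F) aV"
  define bA where "bA = inv_into (arcs F) aA"
  have bV: "bV w \<in> verts F" "aV (bV w) = w" if "w \<in> verts G" for w
    using a(1) that unfolding bV_def by (auto intro: bij_betw_inv_into_right inv_into_into simp: bij_betw_def)
  have bA: "bA g \<in> arcs F" "aA (bA g) = g" if "g \<in> arcs G" for g
    using a(2) that unfolding bA_def by (auto intro: bij_betw_inv_into_right inv_into_into simp: bij_betw_def)
  have "bV (aV w) = w" if "w \<in> verts F" for w
    using a(1) that unfolding bV_def by (simp add: bij_betw_def)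
  then have "tail F (bA g) = bV (tail G g) \<and> head F (bA g) = bV (head G g)" if "g \<in> arcs G" for g
    using a(3) bA[OF that] wf by (metis dgraph_wf_def)
  moreover have "bij_betw bV (verts G) (verts F)" "bij_betw bA (arcs G) (arcs F)"
    using a bij_betw_inv_into unfolding bV_def bA_def by blast+
  ultimately show ?thesis unfolding rep_iso_def using a(4,5) bV bA by metis
qed

definition adj :: "('v,'e) dgraph \<Rightarrow> ('v \<times> 'v) set" where
  "adj F = {(tail F f, head F f) | f. f \<in> arcs F} \<union> {(head F f, tail F f) | f. f \<in> arcs F}"

lemma dg_connected_iff_adj: "dg_connected F \<longleftrightarrow> (\<forall>u\<in>verts F. \<forall>v\<in>verts F. (u, v) \<in> (adj F)\<^sup>*)"
  unfolding dg_connected_def adj_def by simp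

lemma adj_rtrancl_sym: "(u, v) \<in> (adj F)\<^sup>* \<Longrightarrow> (v, u) \<in> (adj F)\<^sup>*"
  by (rule symD[OF sym_rtrancl]) (auto simp: adj_def sym_def)

lemma arc_adj: "f \<in> arcs F \<Longrightarrow> (tail F f, head F f) \<in> adj F"
  unfolding adj_def by blast

lemma dg_connectedI: assumes "\<forall>v\<in>verts F. (w0, v) \<in> (adj F)\<^sup>*" shows "dg_connected F"
  unfolding dg_connected_iff_adj using assms by (meson adj_rtrancl_sym rtrancl_trans)

section \<open>Spine graphs\<close>

definition spine_branches ::
  "('a,'b) egraph \<Rightarrow> ('a \<Rightarrow> 'b) \<Rightarrow> nat set \<Rightarrow> (nat \<Rightarrow> nat) \<Rightarrow> (nat \<Rightarrow> 'b dedge) \<Rightarrow> nat \<Rightarrow> 'b dedge list set"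
where
  "spine_branches E sp I prev lab i =
     {y. basis_word E sp y \<and> basis_word E sp [lab i, hd y] \<and> hd y \<notin> lab ` {j \<in> I. prev j = i}}"

text \<open>Common generalisation of F_x for x in X^infty (I = UNIV, prev = Suc) and for x in X^c
  (I = {..<length x}, prev = cyclic predecessor); the spine vertex w_i is (i, []).\<close>
definition spine_graph :: "('a,'b) egraph \<Rightarrow> ('a \<Rightarrow> 'b) \<Rightarrow> nat set \<Rightarrow> (nat \<Rightarrow> nat) \<Rightarrow> (nat \<Rightarrow> 'b dedge) \<Rightarrow>
    (nat \<times> 'b dedge list, nat \<times> 'b dedge list) dgraph"
where
  "spine_graph E sp I prev lab =
     \<lparr> verts = {(i, []) | i. i \<in> I} \<union> {(i, y) | i y. i \<in> I \<and> y \<in> spine_branches E sp I prev lab i},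
       arcs = {(i, []) | i. i \<in> I} \<union> {(i, y) | i y. i \<in> I \<and> y \<in> spine_branches E sp I prev lab i},
       tail = (\<lambda>(i, y). if y = [] then (prev i, []) else (i, butlast y)),
       head = (\<lambda>p. p) \<rparr>"

definition spine_phiV :: "('a,'b) egraph \<Rightarrow> (nat \<Rightarrow> 'b dedge) \<Rightarrow> nat \<times> 'b dedge list \<Rightarrow> 'a" where
  "spine_phiV E lab = (\<lambda>(i, y). if y = [] then drng E (lab i) else drng E (last y))"

definition spine_phiA :: "(nat \<Rightarrow> 'b dedge) \<Rightarrow> nat \<times> 'b dedge list \<Rightarrow> 'b dedge" where
  "spine_phiA lab = (\<lambda>(i, y). if y = [] then lab i else last y)"

lemma spine_branches_not_Nil: "y \<in> spine_branches E sp I prev lab i \<Longrightarrow> y \<noteq> []"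
  unfolding spine_branches_def using basis_word_not_Nil by blast

lemma spine_graph_verts:
  "(i, y) \<in> verts (spine_graph E sp I prev lab) \<longleftrightarrow> i \<in> I \<and> (y = [] \<or> y \<in> spine_branches E sp I prev lab i)"
  unfolding spine_graph_def by auto

lemma spine_graph_arcs: "arcs (spine_graph E sp I prev lab) = verts (spine_graph E sp I prev lab)"
  unfolding spine_graph_def by simp

lemma spine_graph_head [simp]: "head (spine_graph E sp I prev lab) w = w"
  unfolding spine_graph_def by simp

lemma spine_graph_tail:
  "tail (spine_graph E sp I prev lab) (i, y) = (if y = [] then (prev i, []) else (i, butlast y))"
  unfolding spine_graph_def by simp

lemma spine_phiV_Pair: "spine_phiV E lab (i, y) = (if y = [] then drng E (lab i) else drng E (last y))"
  unfolding spine_phiV_def by simp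

lemma spine_phiA_Pair: "spine_phiA lab (i, y) = (if y = [] then lab i else last y)"
  unfolding spine_phiA_def by simp

lemma spine_phiV_eq: "spine_phiV E lab w = drng E (spine_phiA lab w)"
  by (cases w) (simp add: spine_phiV_Pair spine_phiA_Pair)

lemma spine_graph_in_arcs:
  "w \<in> verts (spine_graph E sp I prev lab) \<Longrightarrow> in_arcs (spine_graph E sp I prev lab) w = {w}"
  unfolding in_arcs_def spine_graph_arcs by auto

lemma spine_graph_out_arcs:
  "(j, z) \<in> out_arcs (spine_graph E sp I prev lab) (i, y) \<longleftrightarrow>
     (z = [] \<and> y = [] \<and> j \<in> I \<and> prev j = i) \<or>
     (j = i \<and> i \<in> I \<and> (\<exists>d. z = y @ [d] \<and> y @ [d] \<in> spine_branches E sp I prev lab i))"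
proof (cases "z = []")
  case False
  then show ?thesis unfolding out_arcs_def spine_graph_arcs
    by (auto simp: spine_graph_tail spine_graph_verts) (rule exI[of _ "last z"], simp)
qed (auto simp: out_arcs_def spine_graph_arcs spine_graph_tail spine_graph_verts)

lemma spine_branches_snoc:
  assumes "y = [] \<or> y \<in> spine_branches E sp I prev lab i"
  shows "y @ [d] \<in> spine_branches E sp I prev lab i \<longleftrightarrow>
    basis_word E sp [spine_phiA lab (i, y), d] \<and> (y = [] \<longrightarrow> d \<notin> lab ` {j \<in> I. prev j = i})"
  using assms spine_branches_not_Nil[of y]
  by (auto simp: spine_branches_def spine_phiA_Pair basis_word_snoc basis_word_singleton
      dest: basis_word_pairD)

lemma hd_butlast: "butlast y \<noteq> [] \<Longrightarrow> hd (butlast y) = hd y"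
  by (induct y) auto

lemma spine_branches_butlast:
  "y \<in> spine_branches E sp I prev lab i \<Longrightarrow> butlast y \<noteq> [] \<Longrightarrow> butlast y \<in> spine_branches E sp I prev lab i"
  by (simp add: spine_branches_def basis_word_butlast hd_butlast)

lemma spine_branch_last_adm:
  assumes "y \<in> spine_branches E sp I prev lab i"
  shows "basis_word E sp [spine_phiA lab (i, butlast y), last y]"
proof -
  have "butlast y = [] \<or> butlast y \<in> spine_branches E sp I prev lab i"
    using assms spine_branches_butlast by blast
  moreover have "butlast y @ [last y] \<in> spine_branches E sp I prev lab i"
    using assms spine_branches_not_Nil by fastforce
  ultimately show ?thesis using spine_branches_snoc by blast
qed

locale spine =
  fixes E :: "('a,'b) egraph" and sp :: "'a \<Rightarrow> 'b"
    and I :: "nat set" and prev :: "nat \<Rightarrow> nat" and lab :: "nat \<Rightarrow> 'b dedge"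
  assumes egraph_wf: "egraph_wf E"
    and I_not_empty: "I \<noteq> {}" and prev_in_I: "\<forall>i\<in>I. prev i \<in> I" and inj_prev: "inj_on prev I"
    and lab_adm: "\<forall>i\<in>I. basis_word E sp [lab (prev i), lab i]"
    and prev_confluent: "\<forall>i\<in>I. \<forall>j\<in>I. \<exists>n m. (prev ^^ n) i = (prev ^^ m) j"
begin

abbreviation "G \<equiv> spine_graph E sp I prev lab"

lemma wf: "dgraph_wf G"
proof -
  have "tail G (i, y) \<in> verts G" if "(i, y) \<in> verts G" for i y
    using that prev_in_I spine_branches_butlast[of y E sp I prev lab i]
    by (auto simp: spine_graph_verts spine_graph_tail)
  then show ?thesis unfolding dgraph_wf_def spine_graph_arcs by auto
qed

lemma phiA_arc:
  assumes "w \<in> verts G"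
  shows "spine_phiA lab w \<in> dedges E \<and> dsrc E (spine_phiA lab w) = spine_phiV E lab (tail G w)"
proof -
  obtain i y where w: "w = (i, y)" by (cases w)
  then have "i \<in> I" "y = [] \<or> y \<in> spine_branches E sp I prev lab i"
    using assms by (auto simp: spine_graph_verts)
  then have "basis_word E sp [spine_phiA lab (tail G w), spine_phiA lab w]"
    using lab_adm spine_branch_last_adm[of y E sp I prev lab i]
    by (auto simp: w spine_graph_tail spine_phiA_Pair)
  then show ?thesis by (simp add: spine_phiV_eq basis_word_pairD)
qed

lemma hom: "dhom E G (spine_phiV E lab) (spine_phiA lab)"
  using phiA_arc dedges_verts[OF egraph_wf] unfolding dhom_def spine_graph_arcs
  by (simp add: spine_phiV_eq)

lemma out_arcs_bij:
  assumes w: "(i, y) \<in> verts G"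
  shows "bij_betw (spine_phiA lab) (out_arcs G (i, y))
           (out_labels E sp G (spine_phiV E lab) (spine_phiA lab) (i, y))"
proof -
  have y: "y = [] \<or> y \<in> spine_branches E sp I prev lab i" and "i \<in> I"
    using w by (auto simp: spine_graph_verts)
  have labels: "out_labels E sp G (spine_phiV E lab) (spine_phiA lab) (i, y) =
      {d. basis_word E sp [spine_phiA lab (i, y), d]}"
    using spine_graph_in_arcs[OF w] by (auto simp: out_labels_def spine_phiV_eq dest: basis_word_pairD)
  have spine_arc: "basis_word E sp [spine_phiA lab (i, y), lab j]" if "y = []" "j \<in> I" "prev j = i" for j
    using lab_adm that by (auto simp: spine_phiA_Pair)
  have "inj_on (spine_phiA lab) (out_arcs G (i, y))"
  proof (rule inj_onI, clarify)
    fix j z j' z'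
    assume "(j, z) \<in> out_arcs G (i, y)" "(j', z') \<in> out_arcs G (i, y)"
      "spine_phiA lab (j, z) = spine_phiA lab (j', z')"
    then show "j = j' \<and> z = z'"
      using inj_prev spine_branches_snoc[OF y]
      by (auto simp: spine_graph_out_arcs spine_phiA_Pair inj_on_def)
  qed
  moreover have "spine_phiA lab ` out_arcs G (i, y) = {d. basis_word E sp [spine_phiA lab (i, y), d]}"
  proof (intro subset_antisym subsetI)
    fix d assume "d \<in> spine_phiA lab ` out_arcs G (i, y)"
    then show "d \<in> {d. basis_word E sp [spine_phiA lab (i, y), d]}"
      using spine_arc spine_branches_snoc[OF y] by (auto simp: spine_graph_out_arcs spine_phiA_Pair)
  next
    fix d assume d: "d \<in> {d. basis_word E sp [spine_phiA lab (i, y), d]}"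
    show "d \<in> spine_phiA lab ` out_arcs G (i, y)"
    proof (cases "y = [] \<and> d \<in> lab ` {j \<in> I. prev j = i}")
      case True
      then obtain j where "j \<in> I" "prev j = i" "d = lab j" "y = []" by blast
      then have "(j, []) \<in> out_arcs G (i, y)" "d = spine_phiA lab (j, [])"
        by (simp_all add: spine_graph_out_arcs spine_phiA_Pair)
      then show ?thesis by blast
    next
      case False
      then have "y @ [d] \<in> spine_branches E sp I prev lab i" using d spine_branches_snoc[OF y] by blast
      then have "(i, y @ [d]) \<in> out_arcs G (i, y)" using \<open>i \<in> I\<close> by (simp add: spine_graph_out_arcs)
      moreover have "d = spine_phiA lab (i, y @ [d])" by (simp add: spine_phiA_Pair)
      ultimately show ?thesis by blast
    qed
  qed
  ultimately show ?thesis unfolding bij_betw_def labels by blast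
qed

lemma ext_rep_graph: "ext_rep_graph E sp G (spine_phiV E lab) (spine_phiA lab)"
  unfolding ext_rep_graph_iff_out_labels using wf hom out_arcs_bij spine_graph_in_arcs by fast

lemma branch_reachable: "(i, y) \<in> verts G \<Longrightarrow> ((i, []), (i, y)) \<in> (adj G)\<^sup>*"
proof (induction "length y" arbitrary: y)
  case (Suc n)
  then have "y \<noteq> []" by auto
  have "tail G (i, y) \<in> verts G" using wf Suc.prems unfolding dgraph_wf_def spine_graph_arcs by blast
  then have "((i, []), (i, butlast y)) \<in> (adj G)\<^sup>*" using Suc \<open>y \<noteq> []\<close> by (simp add: spine_graph_tail)
  moreover have "((i, butlast y), (i, y)) \<in> adj G"
    using arc_adj[of "(i, y)" G] Suc.prems \<open>y \<noteq> []\<close> by (simp add: spine_graph_arcs spine_graph_tail)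
  ultimately show ?case by (rule rtrancl_into_rtrancl)
qed simp

lemma prev_reachable: "i \<in> I \<Longrightarrow> (((prev ^^ n) i, []), (i, [])) \<in> (adj G)\<^sup>* \<and> (prev ^^ n) i \<in> I"
proof (induction n)
  case (Suc n)
  let ?k = "(prev ^^ n) i"
  have "?k \<in> I" using Suc by blast
  then have "((prev ?k, []), (?k, [])) \<in> adj G"
    using arc_adj[of "(?k, [])" G] by (simp add: spine_graph_arcs spine_graph_verts spine_graph_tail)
  then show ?case using Suc \<open>?k \<in> I\<close> prev_in_I by (auto intro: converse_rtrancl_into_rtrancl)
qed simp

lemma ne_conn_erg: "ne_conn_erg E sp G (spine_phiV E lab) (spine_phiA lab)"
proof -
  obtain i0 where i0: "i0 \<in> I" using I_not_empty by blast
  have "((i0, []), (i, y)) \<in> (adj G)\<^sup>*" if v: "(i, y) \<in> verts G" for i y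
  proof -
    have "i \<in> I" using v by (simp add: spine_graph_verts)
    then obtain n m where nm: "(prev ^^ n) i0 = (prev ^^ m) i" using prev_confluent i0 by blast
    then have "((i0, []), ((prev ^^ m) i, [])) \<in> (adj G)\<^sup>*"
      using prev_reachable[OF i0, of n] adj_rtrancl_sym by metis
    also have "(((prev ^^ m) i, []), (i, [])) \<in> (adj G)\<^sup>*" using prev_reachable \<open>i \<in> I\<close> by blast
    also have "((i, []), (i, y)) \<in> (adj G)\<^sup>*" using branch_reachable v by blast
    finally show ?thesis .
  qed
  then have "dg_connected G" by (intro dg_connectedI) auto
  moreover have "(i0, []) \<in> verts G" using i0 by (simp add: spine_graph_verts)
  ultimately show ?thesis using ext_rep_graph by (auto simp: ne_conn_erg_def)
qed

end

section \<open>Recognising spine graphs\<close>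

definition spine_in :: "('v,'e) dgraph \<Rightarrow> ('e \<Rightarrow> 'c) \<Rightarrow> nat set \<Rightarrow> (nat \<Rightarrow> nat) \<Rightarrow> (nat \<Rightarrow> 'c) \<Rightarrow>
    (nat \<Rightarrow> 'v) \<Rightarrow> bool"
where
  "spine_in F phiA I prev lab S \<longleftrightarrow>
     (\<forall>i\<in>I. S i \<in> verts F \<and> (\<exists>f. in_arcs F (S i) = {f} \<and> tail F f = S (prev i) \<and> phiA f = lab i))"

locale spine_rep_graph = rep_graph E sp F phiV phiA
  for E :: "('a,'b) egraph" and sp and F :: "('v,'e) dgraph" and phiV phiA +
  fixes I :: "nat set" and prev :: "nat \<Rightarrow> nat" and lab :: "nat \<Rightarrow> 'b dedge" and S :: "nat \<Rightarrow> 'v"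
  assumes connected: "dg_connected F"
    and I_not_empty: "I \<noteq> {}" and prev_in_I: "\<forall>i\<in>I. prev i \<in> I"
    and inj_S: "inj_on S I" and spine_in: "spine_in F phiA I prev lab S"
begin

lemma spine: "i \<in> I \<Longrightarrow> S i \<in> verts F \<and> (\<exists>f. in_arcs F (S i) = {f} \<and> tail F f = S (prev i) \<and> phiA f = lab i)"
  using spine_in by (simp add: spine_in_def)

inductive addr :: "nat \<Rightarrow> 'b dedge list \<Rightarrow> 'v \<Rightarrow> bool" where
  addr_spine: "i \<in> I \<Longrightarrow> addr i [] (S i)"
| addr_step: "addr i w (tail F f) \<Longrightarrow> f \<in> arcs F \<Longrightarrow>
    (w = [] \<longrightarrow> phiA f \<notin> lab ` {j \<in> I. prev j = i}) \<Longrightarrow> addr i (w @ [phiA f]) (head F f)"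

lemma addr_in_arc: "addr i w v \<Longrightarrow> i \<in> I \<and> v \<in> verts F \<and>
   (\<exists>f. in_arcs F v = {f} \<and> phiA f = (if w = [] then lab i else last w) \<and>
        (w = [] \<longrightarrow> v = S i \<and> tail F f = S (prev i)) \<and>
        (w \<noteq> [] \<longrightarrow> addr i (butlast w) (tail F f) \<and>
                   (butlast w = [] \<longrightarrow> last w \<notin> lab ` {j \<in> I. prev j = i})))"
proof (induction rule: addr.induct)
  case (addr_spine i)
  then show ?case using spine by auto
next
  case (addr_step i w f)
  then show ?case using in_arcs_head[of f] arc[of f] by auto
qed

lemma addr_unique: "addr i w v \<Longrightarrow> addr i' w' v \<Longrightarrow> i = i' \<and> w = w'"
proof (induction "length w + length w'" arbitrary: i w i' w' v rule: less_induct)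
  case less
  obtain f where f: "in_arcs F v = {f}" "phiA f = (if w = [] then lab i else last w)"
    "w = [] \<longrightarrow> v = S i \<and> tail F f = S (prev i)"
    "w \<noteq> [] \<longrightarrow> addr i (butlast w) (tail F f)" and "i \<in> I"
    using addr_in_arc[OF less.prems(1)] by blast
  obtain f' where f': "in_arcs F v = {f'}" "phiA f' = (if w' = [] then lab i' else last w')"
    "w' = [] \<longrightarrow> v = S i' \<and> tail F f' = S (prev i')"
    "w' \<noteq> [] \<longrightarrow> addr i' (butlast w') (tail F f')" and "i' \<in> I"
    using addr_in_arc[OF less.prems(2)] by blast
  have "f' = f" using f f' by auto
  txt \<open>No vertex has both a spine address and a branch address: one step back, both would
    sit at the same spine vertex, but a branch never starts along a spine arc.\<close>
  have spine_vs_branch: False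
    if spine_addr: "addr j [] v" and branch_addr: "addr j' u v" and "u \<noteq> []" "length u \<le> length w + length w'"
    for j j' u
  proof -
    obtain g where g: "in_arcs F v = {g}" "phiA g = lab j" "tail F g = S (prev j)" and "j \<in> I"
      using addr_in_arc[OF spine_addr] by auto
    then have "addr j' (butlast u) (S (prev j))" "phiA g = last u"
      "butlast u = [] \<longrightarrow> last u \<notin> lab ` {k \<in> I. prev k = j'}"
      using addr_in_arc[OF branch_addr] \<open>u \<noteq> []\<close> by auto
    moreover have "addr (prev j) [] (S (prev j))" using prev_in_I \<open>j \<in> I\<close> by (simp add: addr_spine)
    moreover have "length [] + length (butlast u) < length w + length w'"
      using \<open>u \<noteq> []\<close> \<open>length u \<le> length w + length w'\<close> by (cases u) auto
    ultimately have "prev j = j' \<and> [] = butlast u" using less.hyps by blast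
    then show False using g(2) \<open>phiA g = last u\<close> \<open>j \<in> I\<close>
      \<open>butlast u = [] \<longrightarrow> last u \<notin> lab ` {k \<in> I. prev k = j'}\<close> by auto
  qed
  consider "w = []" "w' = []" | "w = []" "w' \<noteq> []" | "w \<noteq> []" "w' = []" | "w \<noteq> []" "w' \<noteq> []"
    by blast
  then show ?case
  proof cases
    case 1
    then show ?thesis using f f' inj_S \<open>i \<in> I\<close> \<open>i' \<in> I\<close> by (auto simp: inj_on_def)
  next
    case 2
    then show ?thesis using spine_vs_branch[of i i' w'] less.prems by simp
  next
    case 3
    then show ?thesis using spine_vs_branch[of i' i w] less.prems by simp
  next
    case 4
    then have "addr i (butlast w) (tail F f)" "addr i' (butlast w') (tail F f)"
      using f f' \<open>f' = f\<close> by auto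
    moreover have "length (butlast w) + length (butlast w') < length w + length w'"
      using 4 by (cases w; cases w') auto
    ultimately have "i = i' \<and> butlast w = butlast w'" using less.hyps by blast
    moreover have "last w = last w'" using f f' \<open>f' = f\<close> 4 by auto
    ultimately show ?thesis using 4 by (metis append_butlast_last_id)
  qed
qed

lemma addr_functional: "addr i w v \<Longrightarrow> addr i w v' \<Longrightarrow> v = v'"
proof (induction arbitrary: v' rule: addr.induct)
  case (addr_spine i)
  then show ?case using addr_in_arc[OF addr_spine.prems] by auto
next
  case (addr_step i w f)
  obtain f' where f': "in_arcs F v' = {f'}" "phiA f' = phiA f" "addr i w (tail F f')"
    using addr_in_arc[OF addr_step.prems] by auto
  have "tail F f' = tail F f" using addr_step.IH f'(3) by simp
  then have "f' \<in> out_arcs F (tail F f)" "f \<in> out_arcs F (tail F f)"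
    using f' addr_step.hyps by (auto simp: in_arcs_def out_arcs_def)
  moreover have "tail F f \<in> verts F" using addr_in_arc[OF addr_step.hyps(1)] by blast
  ultimately have "f = f'" using out_arcs_label_inj f'(2) by simp
  then show ?case using f' by (auto simp: in_arcs_def)
qed

lemma phiV_spine: "i \<in> I \<Longrightarrow> phiV (S i) = drng E (lab i)"
  using spine[of i] arc by (force simp: in_arcs_def)

lemma addr_in_spine_graph:
  "addr i w v \<Longrightarrow> (w = [] \<or> w \<in> spine_branches E sp I prev lab i) \<and> phiV v = spine_phiV E lab (i, w)"
proof (induction rule: addr.induct)
  case (addr_spine i)
  then show ?case using phiV_spine by (simp add: spine_phiV_Pair)
next
  case (addr_step i w f)
  obtain g where g: "in_arcs F (tail F f) = {g}" "phiA g = spine_phiA lab (i, w)"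
    using addr_in_arc[OF addr_step.hyps(1)] by (auto simp: spine_phiA_Pair)
  have "f \<in> out_arcs F (tail F f)" using addr_step.hyps by (simp add: out_arcs_def)
  then have "phiA f \<in> out_labels E sp F phiV phiA (tail F f)"
    using out_arc_label arc addr_step.hyps(2) by blast
  then have "basis_word E sp [spine_phiA lab (i, w), phiA f]" using g by (simp add: out_labels_def)
  then have "w @ [phiA f] \<in> spine_branches E sp I prev lab i"
    using addr_step.IH addr_step.hyps(3) spine_branches_snoc by blast
  then show ?case using arc[OF addr_step.hyps(2)] by (simp add: spine_phiV_Pair)
qed

lemma addr_exists: assumes "v \<in> verts F" shows "\<exists>i w. addr i w v"
proof -
  obtain i0 where "i0 \<in> I" using I_not_empty by blast
  then have "(S i0, v) \<in> (adj F)\<^sup>*" using connected assms spine unfolding dg_connected_iff_adj by blast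
  then show ?thesis
  proof (induction rule: rtrancl_induct)
    case base
    then show ?case using \<open>i0 \<in> I\<close> addr_spine by blast
  next
    case (step y z)
    then obtain i w where y: "addr i w y" by blast
    from step.hyps(2) consider (forward) f where "f \<in> arcs F" "y = tail F f" "z = head F f"
      | (backward) f where "f \<in> arcs F" "y = head F f" "z = tail F f"
      unfolding adj_def by blast
    then show ?case
    proof cases
      case forward
      show ?thesis
      proof (cases "w = [] \<and> phiA f \<in> lab ` {j \<in> I. prev j = i}")
        case True
        then obtain j where j: "j \<in> I" "prev j = i" "phiA f = lab j" by blast
        obtain f0 where f0: "in_arcs F (S j) = {f0}" "tail F f0 = S i" "phiA f0 = lab j"
          using spine[OF j(1)] j(2) by blast
        have "y = S i" "i \<in> I" using addr_in_arc[OF y] True by auto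
        then have "f0 \<in> out_arcs F y" "f \<in> out_arcs F y" "y \<in> verts F"
          using f0 forward spine by (auto simp: in_arcs_def out_arcs_def)
        then have "f = f0" using out_arcs_label_inj f0(3) j(3) by simp
        then have "z = S j" using forward f0 by (auto simp: in_arcs_def)
        then show ?thesis using addr_spine[OF j(1)] by blast
      next
        case False
        then show ?thesis using addr_step[of i w f] y forward by auto
      qed
    next
      case backward
      obtain g where g: "in_arcs F y = {g}" "w = [] \<longrightarrow> tail F g = S (prev i)"
        "w \<noteq> [] \<longrightarrow> addr i (butlast w) (tail F g)" and "i \<in> I"
        using addr_in_arc[OF y] by blast
      then have "g = f" using backward by (auto simp: in_arcs_def)
      then show ?thesis
        using g backward prev_in_I \<open>i \<in> I\<close> addr_spine[of "prev i"] by (cases "w = []") auto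
    qed
  qed
qed

lemma addr_surj: "i \<in> I \<Longrightarrow> y \<in> spine_branches E sp I prev lab i \<Longrightarrow> \<exists>v. addr i y v"
proof (induction y rule: rev_induct)
  case Nil
  then show ?case using spine_branches_not_Nil by blast
next
  case (snoc d w)
  have w: "w = [] \<or> w \<in> spine_branches E sp I prev lab i"
    using snoc.prems spine_branches_butlast[of "w @ [d]"] by fastforce
  then obtain v where v: "addr i w v" using snoc addr_spine by blast
  obtain f where f: "in_arcs F v = {f}" "phiA f = spine_phiA lab (i, w)" and "v \<in> verts F"
    using addr_in_arc[OF v] by (auto simp: spine_phiA_Pair)
  have adm: "basis_word E sp [spine_phiA lab (i, w), d]" "w = [] \<longrightarrow> d \<notin> lab ` {j \<in> I. prev j = i}"
    using snoc.prems(2) spine_branches_snoc[OF w] by auto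
  moreover have "phiV v = drng E (spine_phiA lab (i, w))"
    using addr_in_spine_graph[OF v] by (simp add: spine_phiV_eq)
  ultimately have "d \<in> out_labels E sp F phiV phiA v"
    using f basis_word_pairD[OF adm(1)] by (auto simp: out_labels_def)
  then obtain g where "g \<in> out_arcs F v" "phiA g = d" using out_arc_labelled \<open>v \<in> verts F\<close> by blast
  then have "addr i (w @ [d]) (head F g)"
    using addr_step[of i w g] v adm(2) by (auto simp: out_arcs_def)
  then show ?case by blast
qed

definition coord :: "'v \<Rightarrow> nat \<times> 'b dedge list" where
  "coord v = (THE p. addr (fst p) (snd p) v)"

lemma coord_eq: "addr i w v \<Longrightarrow> coord v = (i, w)"
  unfolding coord_def by (rule the_equality) (auto dest: addr_unique)

lemma addr_coord: "v \<in> verts F \<Longrightarrow> addr (fst (coord v)) (snd (coord v)) v"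
  using addr_exists coord_eq by fastforce

lemma addr_coord_Pair: "v \<in> verts F \<Longrightarrow> coord v = (i, w) \<Longrightarrow> addr i w v"
  using addr_coord[of v] by simp

lemma coord_in_spine_graph: "v \<in> verts F \<Longrightarrow> coord v \<in> verts (spine_graph E sp I prev lab)"
  using addr_coord_Pair[of v] addr_in_arc addr_in_spine_graph
  by (cases "coord v") (auto simp: spine_graph_verts)

lemma coord_bij: "bij_betw coord (verts F) (verts (spine_graph E sp I prev lab))"
proof (rule bij_betw_imageI)
  show "inj_on coord (verts F)"
  proof (rule inj_onI)
    fix v v' assume "v \<in> verts F" "v' \<in> verts F" "coord v = coord v'"
    then show "v = v'" using addr_coord[of v] addr_coord[of v'] addr_functional by simp
  qed
  show "coord ` verts F = verts (spine_graph E sp I prev lab)"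
  proof (intro subset_antisym subsetI)
    fix p assume "p \<in> verts (spine_graph E sp I prev lab)"
    moreover obtain i w where p: "p = (i, w)" by (cases p)
    ultimately have "\<exists>v. addr i w v" using addr_surj addr_spine by (auto simp: spine_graph_verts)
    then obtain v where "addr i w v" by blast
    then have "v \<in> verts F" "coord v = p" using coord_eq addr_in_arc p by auto
    then show "p \<in> coord ` verts F" by blast
  qed (use coord_in_spine_graph in blast)
qed

lemma coord_tail: "f \<in> arcs F \<Longrightarrow> coord (tail F f) = tail (spine_graph E sp I prev lab) (coord (head F f))"
proof -
  assume f: "f \<in> arcs F"
  obtain i w where c: "coord (head F f) = (i, w)" by (cases "coord (head F f)")
  then have "addr i w (head F f)" using addr_coord_Pair arc[OF f] by blast
  from addr_in_arc[OF this] obtain g where g: "in_arcs F (head F f) = {g}"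
      "w = [] \<longrightarrow> tail F g = S (prev i)" "w \<noteq> [] \<longrightarrow> addr i (butlast w) (tail F g)" and "i \<in> I"
    by blast
  have "g = f" using g f by (auto simp: in_arcs_def)
  then show ?thesis
    using g c coord_eq addr_spine prev_in_I \<open>i \<in> I\<close> by (cases "w = []") (auto simp: spine_graph_tail)
qed

lemma coord_phiA: "f \<in> arcs F \<Longrightarrow> spine_phiA lab (coord (head F f)) = phiA f"
proof -
  assume f: "f \<in> arcs F"
  obtain i w where c: "coord (head F f) = (i, w)" by (cases "coord (head F f)")
  then have "addr i w (head F f)" using addr_coord_Pair arc[OF f] by blast
  then show ?thesis
    using addr_in_arc in_arcs_head[OF f] c by (fastforce simp: spine_phiA_Pair)
qed

lemma head_bij: "bij_betw (head F) (arcs F) (verts F)"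
proof (rule bij_betw_imageI)
  show "inj_on (head F) (arcs F)"
  proof (rule inj_onI)
    fix f f' assume f: "f \<in> arcs F" and f': "f' \<in> arcs F" and "head F f = head F f'"
    then have "{f} = in_arcs F (head F f')" using in_arcs_head[OF f] by simp
    also have "\<dots> = {f'}" using in_arcs_head[OF f'] .
    finally show "f = f'" by simp
  qed
  show "head F ` arcs F = verts F"
  proof (intro subset_antisym subsetI)
    fix v assume "v \<in> verts F"
    then have "\<exists>f. in_arcs F v = {f}" using addr_in_arc[OF addr_coord[of v]] by blast
    then show "v \<in> head F ` arcs F" by (auto simp: in_arcs_def)
  next
    fix v assume "v \<in> head F ` arcs F"
    then show "v \<in> verts F" using arc by blast
  qed
qed

theorem iso_spine_graph:
  "rep_iso F phiV phiA (spine_graph E sp I prev lab) (spine_phiV E lab) (spine_phiA lab)"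
  unfolding rep_iso_def
proof (intro exI conjI ballI)
  let ?G = "spine_graph E sp I prev lab"
  show "bij_betw coord (verts F) (verts ?G)" by (rule coord_bij)
  show "bij_betw (coord \<circ> head F) (arcs F) (arcs ?G)"
    unfolding spine_graph_arcs by (rule bij_betw_trans[OF head_bij coord_bij])
  fix f assume f: "f \<in> arcs F"
  show "tail ?G ((coord \<circ> head F) f) = coord (tail F f)" using coord_tail[OF f] by simp
  show "head ?G ((coord \<circ> head F) f) = coord (head F f)" by simp
  show "spine_phiA lab ((coord \<circ> head F) f) = phiA f" using coord_phiA[OF f] by simp
next
  fix v assume "v \<in> verts F"
  then show "spine_phiV E lab (coord v) = phiV v"
    using addr_coord_Pair[of v] addr_in_spine_graph by (cases "coord v") auto
qed

end

section \<open>The graphs F_v\<close>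

lemma mem_Xv_iff:
  "(u, w) \<in> Xv E sp v \<longleftrightarrow> u = v \<and> (w = [] \<and> v \<in> V0 E \<or> basis_word E sp w \<and> dsrc E (hd w) = v)"
  unfolding Xv_def basis_paths_def using basis_word_not_Nil by fastforce

lemma bp_rng_Pair: "bp_rng E (u, w) = (if w = [] then u else drng E (last w))"
  by (simp add: bp_rng_def)

lemma Xv_snoc:
  assumes "(v, w) \<in> Xv E sp v"
  shows "(v, w @ [d]) \<in> Xv E sp v \<longleftrightarrow>
    d \<in> dedges E \<and> dsrc E d = bp_rng E (v, w) \<and> (w \<noteq> [] \<longrightarrow> basis_word E sp [last w, d])"
  using assms by (auto simp: mem_Xv_iff bp_rng_Pair basis_word_snoc basis_word_singleton dest: basis_word_pairD)

lemma Xv_butlast: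
  assumes "v \<in> V0 E" "(v, w) \<in> Xv E sp v" "w \<noteq> []"
  shows "(v, butlast w) \<in> Xv E sp v"
  using assms
  by (cases "butlast w = []") (simp_all add: mem_Xv_iff basis_word_butlast hd_butlast)

lemma Fv_simps:
  "verts (Fv E sp v) = Xv E sp v" "arcs (Fv E sp v) = {x \<in> Xv E sp v. snd x \<noteq> []}"
  "tail (Fv E sp v) x = (fst x, butlast (snd x))" "head (Fv E sp v) x = x"
  by (simp_all add: Fv_def)

lemma Fv_in_arcs: "(v, w) \<in> Xv E sp v \<Longrightarrow> in_arcs (Fv E sp v) (v, w) = (if w = [] then {} else {(v, w)})"
  unfolding in_arcs_def Fv_simps by auto

lemma Fv_out_arcs:
  "out_arcs (Fv E sp v) (v, w) = (\<lambda>d. (v, w @ [d])) ` {d. (v, w @ [d]) \<in> Xv E sp v}"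
proof -
  have "x \<in> Xv E sp v \<and> snd x \<noteq> [] \<and> (fst x, butlast (snd x)) = (v, w) \<longleftrightarrow>
      (\<exists>d. x = (v, w @ [d]) \<and> (v, w @ [d]) \<in> Xv E sp v)" for x
    by (cases x) (auto simp: mem_Xv_iff intro!: exI[of _ "last (snd x)"])
  then show ?thesis unfolding out_arcs_def Fv_simps by auto
qed

context
  fixes E :: "('a,'b) egraph" and sp :: "'a \<Rightarrow> 'b" and v :: 'a
  assumes egraph_wf: "egraph_wf E" and v_in_V0: "v \<in> V0 E"
begin

lemma Fv_wf: "dgraph_wf (Fv E sp v)"
  unfolding dgraph_wf_def Fv_simps using Xv_butlast[OF v_in_V0] by (auto simp: mem_Xv_iff)

lemma Fv_hom: "dhom E (Fv E sp v) (Fv_phiV E) Fv_phiA"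
  unfolding dhom_def
proof (intro conjI ballI)
  fix x assume "x \<in> verts (Fv E sp v)"
  then obtain w where x: "x = (v, w)" "(v, w) \<in> Xv E sp v" by (cases x) (auto simp: Fv_simps mem_Xv_iff)
  show "Fv_phiV E x \<in> V0 E"
  proof (cases "w = []")
    case False
    then have "last w \<in> dedges E" using x basis_word_set by (fastforce simp: mem_Xv_iff)
    then show ?thesis using x False dedges_verts[OF egraph_wf] by (simp add: Fv_phiV_def bp_rng_Pair)
  qed (use x v_in_V0 in \<open>simp add: Fv_phiV_def bp_rng_Pair\<close>)
next
  fix x assume "x \<in> arcs (Fv E sp v)"
  then obtain w where x: "x = (v, w)" "(v, w) \<in> Xv E sp v" "w \<noteq> []"
    by (cases x) (auto simp: Fv_simps mem_Xv_iff)
  then have "(v, butlast w @ [last w]) \<in> Xv E sp v" by simp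
  then have "last w \<in> dedges E" "dsrc E (last w) = bp_rng E (v, butlast w)"
    using Xv_snoc[OF Xv_butlast[OF v_in_V0 x(2,3)]] by auto
  then show "Fv_phiA x \<in> dedges E" "dsrc E (Fv_phiA x) = Fv_phiV E (tail (Fv E sp v) x)"
    "drng E (Fv_phiA x) = Fv_phiV E (head (Fv E sp v) x)"
    using x by (simp_all add: Fv_phiA_def Fv_phiV_def Fv_simps bp_rng_Pair)
qed

lemma Fv_out_arcs_bij:
  assumes "(v, w) \<in> Xv E sp v"
  shows "bij_betw Fv_phiA (out_arcs (Fv E sp v) (v, w)) (out_labels E sp (Fv E sp v) (Fv_phiV E) Fv_phiA (v, w))"
proof -
  have "out_labels E sp (Fv E sp v) (Fv_phiV E) Fv_phiA (v, w) = {d. (v, w @ [d]) \<in> Xv E sp v}"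
    using Xv_snoc[OF assms] Fv_in_arcs[OF assms] by (auto simp: out_labels_def Fv_phiV_def Fv_phiA_def)
  moreover have "inj_on Fv_phiA ((\<lambda>d. (v, w @ [d])) ` D)" for D
    by (auto simp: inj_on_def Fv_phiA_def)
  ultimately show ?thesis
    unfolding Fv_out_arcs bij_betw_def by (auto simp: Fv_phiA_def image_image)
qed

lemma Fv_ne_conn_erg: "ne_conn_erg E sp (Fv E sp v) (Fv_phiV E) Fv_phiA"
proof -
  have vertex: "(in_arcs (Fv E sp v) x = {} \<or> (\<exists>f. in_arcs (Fv E sp v) x = {f})) \<and>
      bij_betw Fv_phiA (out_arcs (Fv E sp v) x) (out_labels E sp (Fv E sp v) (Fv_phiV E) Fv_phiA x)"
    if "x \<in> verts (Fv E sp v)" for x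
  proof -
    obtain u w where x: "x = (u, w)" by (cases x)
    with that have "u = v" and xv: "(v, w) \<in> Xv E sp v" by (simp_all add: Fv_simps mem_Xv_iff)
    then show ?thesis using Fv_in_arcs[OF xv] Fv_out_arcs_bij[OF xv] x by (cases "w = []") auto
  qed
  have reach: "((v, []), (v, w)) \<in> (adj (Fv E sp v))\<^sup>*" if "(v, w) \<in> Xv E sp v" for w
    using that
  proof (induction "length w" arbitrary: w)
    case (Suc n)
    then have "w \<noteq> []" by auto
    then have "((v, []), (v, butlast w)) \<in> (adj (Fv E sp v))\<^sup>*"
      using Suc Xv_butlast[OF v_in_V0] by simp
    moreover have "((v, butlast w), (v, w)) \<in> adj (Fv E sp v)"
      using arc_adj[of "(v, w)" "Fv E sp v"] Suc.prems \<open>w \<noteq> []\<close> by (simp add: Fv_simps)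
    ultimately show ?case by (rule rtrancl_into_rtrancl)
  qed simp
  have "dg_connected (Fv E sp v)"
  proof (rule dg_connectedI[of _ "(v, [])"], intro ballI)
    fix x assume "x \<in> verts (Fv E sp v)"
    then obtain w where "x = (v, w)" "(v, w) \<in> Xv E sp v" by (cases x) (auto simp: Fv_simps Xv_def)
    then show "((v, []), x) \<in> (adj (Fv E sp v))\<^sup>*" using reach by simp
  qed
  moreover have "(v, []) \<in> verts (Fv E sp v)" using v_in_V0 by (simp add: Fv_simps mem_Xv_iff)
  moreover have "ext_rep_graph E sp (Fv E sp v) (Fv_phiV E) Fv_phiA"
    unfolding ext_rep_graph_iff_out_labels using Fv_wf Fv_hom vertex by blast
  ultimately show ?thesis by (auto simp: ne_conn_erg_def)
qed

end

locale rooted_rep_graph = rep_graph E sp F phiV phiA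
  for E :: "('a,'b) egraph" and sp and F :: "('v,'e) dgraph" and phiV phiA +
  fixes r :: 'v
  assumes connected: "dg_connected F" and root_in_verts: "r \<in> verts F" and root_source: "in_arcs F r = {}"
begin

inductive path_to :: "'b dedge list \<Rightarrow> 'v \<Rightarrow> bool" where
  path_root: "path_to [] r"
| path_step: "path_to w (tail F f) \<Longrightarrow> f \<in> arcs F \<Longrightarrow> path_to (w @ [phiA f]) (head F f)"

lemma path_to_in_arc: "path_to w v \<Longrightarrow> v \<in> verts F \<and> (w = [] \<longrightarrow> v = r) \<and>
   (w \<noteq> [] \<longrightarrow> (\<exists>f. in_arcs F v = {f} \<and> phiA f = last w \<and> path_to (butlast w) (tail F f)))"
proof (induction rule: path_to.induct)
  case path_root
  then show ?case using root_in_verts by simp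
next
  case (path_step w f)
  then show ?case using in_arcs_head[of f] arc[of f] by auto
qed

lemma path_to_unique: "path_to w v \<Longrightarrow> path_to w' v \<Longrightarrow> w = w'"
proof (induction arbitrary: w' rule: path_to.induct)
  case path_root
  then show ?case using path_to_in_arc root_source by fastforce
next
  case (path_step w f)
  then have "w' \<noteq> []" using path_to_in_arc in_arcs_head root_source by fastforce
  then obtain f' where f': "in_arcs F (head F f) = {f'}" "phiA f' = last w'" "path_to (butlast w') (tail F f')"
    using path_to_in_arc[OF path_step.prems] by auto
  then have "f' = f" using in_arcs_head[OF path_step.hyps(2)] by simp
  then show ?case using path_step.IH f' \<open>w' \<noteq> []\<close> by (metis append_butlast_last_id)
qed

lemma path_to_functional: "path_to w v \<Longrightarrow> path_to w v' \<Longrightarrow> v = v'"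
proof (induction arbitrary: v' rule: path_to.induct)
  case path_root
  then show ?case using path_to_in_arc by blast
next
  case (path_step w f)
  obtain f' where f': "in_arcs F v' = {f'}" "phiA f' = phiA f" "path_to w (tail F f')"
    using path_to_in_arc[OF path_step.prems] by auto
  have "tail F f' = tail F f" using path_step.IH f'(3) by simp
  then have "f' \<in> out_arcs F (tail F f)" "f \<in> out_arcs F (tail F f)"
    using f' path_step.hyps by (auto simp: in_arcs_def out_arcs_def)
  moreover have "tail F f \<in> verts F" using path_to_in_arc[OF path_step.hyps(1)] by blast
  ultimately have "f = f'" using out_arcs_label_inj f'(2) by simp
  then show ?case using f' by (auto simp: in_arcs_def)
qed

lemma path_to_in_Fv: "path_to w v \<Longrightarrow> (phiV r, w) \<in> Xv E sp (phiV r) \<and> bp_rng E (phiV r, w) = phiV v"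
proof (induction rule: path_to.induct)
  case path_root
  then show ?case using phiV_in_V0[OF root_in_verts] by (simp add: mem_Xv_iff bp_rng_Pair)
next
  case (path_step w f)
  have "f \<in> out_arcs F (tail F f)" "tail F f \<in> verts F" using path_step.hyps arc by (auto simp: out_arcs_def)
  then have label: "phiA f \<in> out_labels E sp F phiV phiA (tail F f)" by (rule out_arc_label[rotated])
  have "w \<noteq> [] \<longrightarrow> basis_word E sp [last w, phiA f]"
    using label path_to_in_arc[OF path_step.hyps(1)] by (auto simp: out_labels_def)
  then have "(phiV r, w @ [phiA f]) \<in> Xv E sp (phiV r)"
    using label path_step.IH Xv_snoc[of "phiV r" w E sp "phiA f"] by (auto simp: out_labels_def)
  then show ?case using arc[OF path_step.hyps(2)] by (simp add: bp_rng_Pair)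
qed

lemma path_to_exists: assumes "v \<in> verts F" shows "\<exists>w. path_to w v"
proof -
  have "(r, v) \<in> (adj F)\<^sup>*" using connected assms root_in_verts unfolding dg_connected_iff_adj by blast
  then show ?thesis
  proof (induction rule: rtrancl_induct)
    case base
    then show ?case using path_root by blast
  next
    case (step y z)
    then obtain w where y: "path_to w y" by blast
    from step.hyps(2) consider (forward) f where "f \<in> arcs F" "y = tail F f" "z = head F f"
      | (backward) f where "f \<in> arcs F" "y = head F f" "z = tail F f"
      unfolding adj_def by blast
    then show ?case
    proof cases
      case forward
      then show ?thesis using path_step[of w f] y by auto
    next
      case backward
      then have "w \<noteq> []" using y path_to_in_arc in_arcs_head root_source by fastforce
      then obtain g where "in_arcs F y = {g}" "path_to (butlast w) (tail F g)"
        using path_to_in_arc[OF y] by blast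
      then show ?thesis using backward in_arcs_head by auto
    qed
  qed
qed

lemma path_to_surj: "(phiV r, y) \<in> Xv E sp (phiV r) \<Longrightarrow> \<exists>v. path_to y v"
proof (induction y rule: rev_induct)
  case Nil
  then show ?case using path_root by blast
next
  case (snoc d w)
  then have "w = [] \<or> (phiV r, w) \<in> Xv E sp (phiV r)"
    using Xv_butlast[OF phiV_in_V0[OF root_in_verts], of "w @ [d]"] by auto
  then obtain v where v: "path_to w v" using snoc.IH path_root by blast
  have adm: "d \<in> dedges E" "dsrc E d = phiV v" "w \<noteq> [] \<longrightarrow> basis_word E sp [last w, d]"
    using snoc.prems Xv_snoc[of "phiV r" w E sp d] path_to_in_Fv[OF v] by auto
  have "v \<in> verts F" using path_to_in_arc[OF v] by blast
  moreover have "d \<in> out_labels E sp F phiV phiA v"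
    using adm path_to_in_arc[OF v] root_source by (cases "w = []") (auto simp: out_labels_def)
  ultimately obtain g where "g \<in> out_arcs F v" "phiA g = d" using out_arc_labelled by blast
  then have "path_to (w @ [d]) (head F g)" using path_step[of w g] v by (auto simp: out_arcs_def)
  then show ?case by blast
qed

definition path_word :: "'v \<Rightarrow> 'b dedge list" where
  "path_word v = (THE w. path_to w v)"

lemma path_word_eq: "path_to w v \<Longrightarrow> path_word v = w"
  unfolding path_word_def by (rule the_equality) (auto dest: path_to_unique)

lemma path_to_path_word: "v \<in> verts F \<Longrightarrow> path_to (path_word v) v"
  using path_to_exists path_word_eq by fastforce

lemma path_word_Nil_iff: "v \<in> verts F \<Longrightarrow> path_word v = [] \<longleftrightarrow> v = r"
  using path_to_in_arc[OF path_to_path_word] path_word_eq path_root by metis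

lemma path_word_bij: "bij_betw (\<lambda>v. (phiV r, path_word v)) (verts F) (Xv E sp (phiV r))"
proof (rule bij_betw_imageI)
  show "inj_on (\<lambda>v. (phiV r, path_word v)) (verts F)"
    by (rule inj_onI) (metis path_to_path_word path_to_functional prod.inject)
  show "(\<lambda>v. (phiV r, path_word v)) ` verts F = Xv E sp (phiV r)"
  proof (intro subset_antisym subsetI)
    fix p assume p: "p \<in> Xv E sp (phiV r)"
    then obtain w where "p = (phiV r, w)" by (cases p) (simp add: mem_Xv_iff)
    moreover obtain v where "path_to w v" using path_to_surj p calculation by blast
    ultimately show "p \<in> (\<lambda>v. (phiV r, path_word v)) ` verts F"
      using path_word_eq path_to_in_arc by blast
  qed (use path_to_in_Fv path_to_path_word in blast)
qed

lemma path_word_head: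
  assumes "f \<in> arcs F"
  shows "path_word (head F f) \<noteq> [] \<and> path_word (tail F f) = butlast (path_word (head F f)) \<and>
    phiA f = last (path_word (head F f))"
proof -
  have "head F f \<noteq> r" using assms root_source in_arcs_head by fastforce
  then have "path_word (head F f) \<noteq> []" using path_word_Nil_iff arc assms by blast
  then obtain g where "in_arcs F (head F f) = {g}" "phiA g = last (path_word (head F f))"
      "path_to (butlast (path_word (head F f))) (tail F g)"
    using path_to_in_arc[OF path_to_path_word] arc assms by blast
  moreover have "g = f" using calculation(1) in_arcs_head[OF assms] by simp
  ultimately show ?thesis using \<open>path_word (head F f) \<noteq> []\<close> path_word_eq by blast
qed

theorem iso_Fv: "rep_iso F phiV phiA (Fv E sp (phiV r)) (Fv_phiV E) Fv_phiA"
  unfolding rep_iso_def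
proof (intro exI conjI ballI)
  let ?c = "\<lambda>v. (phiV r, path_word v)"
  show bij: "bij_betw ?c (verts F) (verts (Fv E sp (phiV r)))"
    using path_word_bij by (simp add: Fv_simps)
  show "bij_betw (?c \<circ> head F) (arcs F) (arcs (Fv E sp (phiV r)))"
  proof (rule bij_betw_imageI)
    show "inj_on (?c \<circ> head F) (arcs F)"
    proof (rule inj_onI)
      fix f f' assume f: "f \<in> arcs F" and f': "f' \<in> arcs F" and "(?c \<circ> head F) f = (?c \<circ> head F) f'"
      then have "head F f = head F f'" using bij arc by (simp add: bij_betw_def inj_on_def)
      then have "{f} = in_arcs F (head F f')" using in_arcs_head[OF f] by simp
      also have "\<dots> = {f'}" using in_arcs_head[OF f'] .
      finally show "f = f'" by simp
    qed
    show "(?c \<circ> head F) ` arcs F = arcs (Fv E sp (phiV r))"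
    proof (intro subset_antisym subsetI)
      fix p assume p: "p \<in> arcs (Fv E sp (phiV r))"
      then obtain v where v: "v \<in> verts F" "p = ?c v"
        using bij by (auto simp: Fv_simps bij_betw_def)
      then have "path_word v \<noteq> []" using p by (simp add: Fv_simps)
      then obtain f where "in_arcs F v = {f}" using path_to_in_arc[OF path_to_path_word] v by blast
      then show "p \<in> (?c \<circ> head F) ` arcs F" using v by (auto simp: in_arcs_def)
    next
      fix p assume "p \<in> (?c \<circ> head F) ` arcs F"
      then obtain f where "f \<in> arcs F" "p = ?c (head F f)" by auto
      then show "p \<in> arcs (Fv E sp (phiV r))"
        using path_word_head path_to_in_Fv[OF path_to_path_word] arc by (auto simp: Fv_simps)
    qed
  qed
  fix f assume "f \<in> arcs F"
  then show "tail (Fv E sp (phiV r)) ((?c \<circ> head F) f) = ?c (tail F f)"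
    "head (Fv E sp (phiV r)) ((?c \<circ> head F) f) = ?c (head F f)"
    "Fv_phiA ((?c \<circ> head F) f) = phiA f"
    using path_word_head by (simp_all add: Fv_simps Fv_phiA_def)
next
  fix v assume "v \<in> verts F"
  then show "Fv_phiV E (phiV r, path_word v) = phiV v"
    using path_to_in_Fv path_to_path_word by (simp add: Fv_phiV_def)
qed

end

section \<open>F_x for x in X^infty and in X^c as spine graphs\<close>

definition cyc_pred :: "nat \<Rightarrow> nat \<Rightarrow> nat" where
  "cyc_pred m i = (i + m - 1) mod m"

lemma cyc_pred_less: "0 < m \<Longrightarrow> cyc_pred m i < m"
  by (simp add: cyc_pred_def)

lemma cyc_pred_eq: "0 < m \<Longrightarrow> i < m \<Longrightarrow> cyc_pred m i = (if i = 0 then m - 1 else i - 1)"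
  by (auto simp: cyc_pred_def mod_if)

lemma cyc_pred_add_mod: "0 < m \<Longrightarrow> cyc_pred m ((k + t) mod m) = (cyc_pred m k + t) mod m"
proof -
  assume "0 < m"
  then have "cyc_pred m i = (i + (m - 1)) mod m" for i by (simp add: cyc_pred_def)
  then show ?thesis by (simp add: mod_simps ac_simps)
qed

lemma cyc_pred_Suc_mod: "0 < m \<Longrightarrow> i < m \<Longrightarrow> cyc_pred m (Suc i mod m) = i"
  by (cases "Suc i = m") (simp_all add: cyc_pred_eq)

lemma Suc_cyc_pred_mod: "0 < m \<Longrightarrow> i < m \<Longrightarrow> Suc (cyc_pred m i) mod m = i"
  by (cases "i = 0") (simp_all add: cyc_pred_eq)

lemma funpow_cyc_pred: "0 < m \<Longrightarrow> i < m \<Longrightarrow> k \<le> i \<Longrightarrow> (cyc_pred m ^^ k) i = i - k"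
  by (induction k) (auto simp: cyc_pred_eq)

lemma funpow_cyc_pred_period: "0 < m \<Longrightarrow> i < m \<Longrightarrow> (cyc_pred m ^^ m) i = i"
proof -
  assume m: "0 < m" and i: "i < m"
  have "(cyc_pred m ^^ Suc i) i = m - 1"
    using funpow_cyc_pred[OF m i, of i] m by (simp add: cyc_pred_eq)
  moreover have "m = (m - Suc i) + Suc i" using i by simp
  ultimately have "(cyc_pred m ^^ m) i = (cyc_pred m ^^ (m - Suc i)) (m - 1)"
    by (metis comp_apply funpow_add)
  also have "\<dots> = i" using funpow_cyc_pred[OF m, of "m - 1" "m - Suc i"] m i by simp
  finally show ?thesis .
qed

lemma funpow_Suc: "(Suc ^^ n) i = n + i"
  by (induction n) auto

lemma Xinf_iff: "x \<in> Xinf E sp \<longleftrightarrow> (\<forall>k. basis_word E sp [x (Suc k), x k])"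
proof
  assume x: "x \<in> Xinf E sp"
  show "\<forall>k. basis_word E sp [x (Suc k), x k]"
  proof
    fix k
    have "\<forall>n\<ge>1. basis_word E sp (map x (rev [0..<n]))" using x unfolding Xinf_def by simp
    then have "basis_word E sp (map x (rev [0..<Suc (Suc k)]))" by (erule_tac x="Suc (Suc k)" in allE) simp
    then have "basis_word E sp (x (Suc k) # x k # map x (rev [0..<k]))" by simp
    then show "basis_word E sp [x (Suc k), x k]"
      using basis_word_Cons[of E sp "x (Suc k)" "x k # map x (rev [0..<k])"] by simp
  qed
next
  assume adm: "\<forall>k. basis_word E sp [x (Suc k), x k]"
  have chain: "basis_word E sp (map x (rev [0..<Suc n]))" for n
  proof (induction n)
    case 0
    then show ?case using basis_word_pairD[OF adm[rule_format, of 0]] by (simp add: basis_word_singleton)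
  next
    case (Suc n)
    have "map x (rev [0..<Suc (Suc n)]) = x (Suc n) # map x (rev [0..<Suc n])"
      "hd (map x (rev [0..<Suc n])) = x n" "map x (rev [0..<Suc n]) \<noteq> []"
      by simp_all
    then show ?case
      using basis_word_Cons[of E sp "x (Suc n)" "map x (rev [0..<Suc n])"] Suc.IH adm by simp
  qed
  show "x \<in> Xinf E sp" unfolding Xinf_def
  proof (intro CollectI allI impI)
    fix n :: nat assume "1 \<le> n"
    then obtain k where "n = Suc k" by (cases n) auto
    then show "basis_word E sp (map x (rev [0..<n]))" using chain by simp
  qed
qed

lemma cyclic_steps_iff:
  assumes "y \<noteq> []"
  shows "(\<forall>k<length y. R (y ! cyc_pred (length y) k) (y ! k)) \<longleftrightarrow>
    successively R y \<and> R (last y) (hd y)"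
proof -
  have m: "0 < length y" using assms by simp
  have "(\<forall>k<length y. R (y ! cyc_pred (length y) k) (y ! k)) \<longleftrightarrow>
      (\<forall>i. Suc i < length y \<longrightarrow> R (y ! i) (y ! Suc i)) \<and> R (y ! (length y - 1)) (y ! 0)"
  proof safe
    fix i assume "\<forall>k<length y. R (y ! cyc_pred (length y) k) (y ! k)" "Suc i < length y"
    then show "R (y ! i) (y ! Suc i)" using cyc_pred_eq[OF m, of "Suc i"] by auto
  next
    assume "\<forall>k<length y. R (y ! cyc_pred (length y) k) (y ! k)"
    then show "R (y ! (length y - 1)) (y ! 0)" using cyc_pred_eq[OF m, of 0] m by auto
  next
    fix k assume "\<forall>i. Suc i < length y \<longrightarrow> R (y ! i) (y ! Suc i)" "R (y ! (length y - 1)) (y ! 0)"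
      "k < length y"
    then show "R (y ! cyc_pred (length y) k) (y ! k)"
      using cyc_pred_eq[OF m \<open>k < length y\<close>] by (cases k) auto
  qed
  then show ?thesis
    using assms by (simp add: successively_conv_nth hd_conv_nth last_conv_nth)
qed

lemma Xc_iff_cyclic_path:
  "y \<in> Xc E \<longleftrightarrow> y \<noteq> [] \<and> set y \<subseteq> dedges E \<and>
    (\<forall>k<length y. drng E (y ! cyc_pred (length y) k) = dsrc E (y ! k)) \<and>
    ((\<forall>c\<in>set y. \<exists>e. c = Real e) \<or> (\<forall>c\<in>set y. \<exists>e. c = Ghost e))"
  using cyclic_steps_iff[of y "\<lambda>a b. drng E a = dsrc E b"]
  by (auto simp: Xc_def dpath_def ex_map_conv)

lemma cyclic_adm_same_kind:
  assumes m: "0 < length y"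
    and adm: "\<forall>k<length y. adm_pair E sp (y ! cyc_pred (length y) k) (y ! k)"
  shows "(\<forall>c\<in>set y. \<exists>e. c = Real e) \<or> (\<forall>c\<in>set y. \<exists>e. c = Ghost e)"
proof (cases "\<exists>k0<length y. \<exists>e. y ! k0 = Ghost e")
  case True
  then obtain k0 where k0: "k0 < length y" "\<exists>e. y ! k0 = Ghost e" by blast
  have "\<exists>e. y ! ((k0 + j) mod length y) = Ghost e" for j
  proof (induction j)
    case (Suc j)
    let ?k = "(k0 + Suc j) mod length y"
    have "cyc_pred (length y) ?k = (k0 + j) mod length y"
      using cyc_pred_Suc_mod[OF m, of "(k0 + j) mod length y"] m by (simp add: mod_Suc_eq)
    moreover have "?k < length y" using m by simp
    ultimately have "adm_pair E sp (y ! ((k0 + j) mod length y)) (y ! ?k)"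
      using adm by metis
    then show ?case using Suc by (cases "y ! ?k") (auto simp: adm_pair_def)
  qed (use k0 in simp)
  moreover have "l = (k0 + (l + length y - k0)) mod length y" if "l < length y" for l
    using that k0(1) by simp
  ultimately have "\<forall>l<length y. \<exists>e. y ! l = Ghost e" by metis
  then have "\<forall>c\<in>set y. \<exists>e. c = Ghost e" by (auto simp: in_set_conv_nth)
  then show ?thesis by blast
next
  case False
  then have "\<forall>l<length y. \<exists>e. y ! l = Real e" by (metis dedge.exhaust)
  then have "\<forall>c\<in>set y. \<exists>e. c = Real e" by (auto simp: in_set_conv_nth)
  then show ?thesis by blast
qed

lemma Xc_iff_cyclic_adm:
  "y \<in> Xc E \<longleftrightarrow> y \<noteq> [] \<and> (\<forall>k<length y. basis_word E sp [y ! cyc_pred (length y) k, y ! k])"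
proof (cases "y = []")
  case False
  then have m: "0 < length y" by simp
  show ?thesis
  proof
    assume y: "y \<in> Xc E"
    have "basis_word E sp [y ! cyc_pred (length y) k, y ! k]" if k: "k < length y" for k
    proof -
      let ?c = "y ! cyc_pred (length y) k" and ?d = "y ! k"
      have in_set: "?d \<in> set y" "?c \<in> set y" using k cyc_pred_less[OF m] by simp_all
      then have "?c \<in> dedges E" "?d \<in> dedges E" "drng E ?c = dsrc E ?d"
        using y k unfolding Xc_iff_cyclic_path by auto
      moreover have "(\<exists>e f. ?c = Real e \<and> ?d = Real f) \<or> (\<exists>e f. ?c = Ghost e \<and> ?d = Ghost f)"
        using y in_set unfolding Xc_iff_cyclic_path by blast
      ultimately show ?thesis unfolding basis_word_pair adm_pair_def by auto
    qed
    then show "y \<noteq> [] \<and> (\<forall>k<length y. basis_word E sp [y ! cyc_pred (length y) k, y ! k])"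
      using False by blast
  next
    assume "y \<noteq> [] \<and> (\<forall>k<length y. basis_word E sp [y ! cyc_pred (length y) k, y ! k])"
    then have adm: "\<forall>k<length y. adm_pair E sp (y ! cyc_pred (length y) k) (y ! k)"
      by (simp add: basis_word_pair)
    then have "set y \<subseteq> dedges E" by (auto simp: in_set_conv_nth adm_pair_def)
    then show "y \<in> Xc E"
      using False adm cyclic_adm_same_kind[OF m adm] unfolding Xc_iff_cyclic_path
      by (simp add: adm_pair_def)
  qed
qed (simp add: Xc_def dpath_def)

lemma Finf_eq_spine_graph:
  "Finf E sp x = spine_graph E sp UNIV Suc x" "Finf_phiV E x = spine_phiV E x" "Finf_phiA x = spine_phiA x"
proof -
  have "x ` {j \<in> UNIV. Suc j = i} = (if i = 0 then {} else {x (i - 1)})" for i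
    by (cases i) auto
  then have "Xi_inf E sp x i = spine_branches E sp UNIV Suc x i" for i
    unfolding Xi_inf_def spine_branches_def by auto
  then show "Finf E sp x = spine_graph E sp UNIV Suc x"
    unfolding Finf_def spine_graph_def by simp
qed (simp_all add: Finf_phiV_def spine_phiV_def Finf_phiA_def spine_phiA_def)

lemma Fc_eq_spine_graph:
  assumes "y \<noteq> []"
  shows "Fc E sp y = spine_graph E sp {..<length y} (cyc_pred (length y)) ((!) y)"
    "Fc_phiV E y = spine_phiV E ((!) y)" "Fc_phiA y = spine_phiA ((!) y)"
proof -
  have m: "0 < length y" using assms by simp
  have "{j \<in> {..<length y}. cyc_pred (length y) j = i} = {Suc i mod length y}" if "i < length y" for i
    using cyc_pred_Suc_mod[OF m that] Suc_cyc_pred_mod[OF m] m by auto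
  then have "Xi_c E sp y i = spine_branches E sp {..<length y} (cyc_pred (length y)) ((!) y) i"
    if "i < length y" for i
    using that unfolding Xi_c_def spine_branches_def by auto
  then show "Fc E sp y = spine_graph E sp {..<length y} (cyc_pred (length y)) ((!) y)"
    unfolding Fc_def spine_graph_def cyc_pred_def[abs_def] by auto
qed (simp_all add: Fc_phiV_def spine_phiV_def Fc_phiA_def spine_phiA_def)

lemma spine_Finf: "egraph_wf E \<Longrightarrow> x \<in> Xinf E sp \<Longrightarrow> spine E sp UNIV Suc x"
proof unfold_locales
  show "\<forall>i\<in>UNIV. \<forall>j\<in>UNIV. \<exists>n m. (Suc ^^ n) i = (Suc ^^ m) j"
    by (metis add.commute funpow_Suc)
qed (auto simp: Xinf_iff)

lemma spine_Fc: "egraph_wf E \<Longrightarrow> y \<in> Xc E \<Longrightarrow> spine E sp {..<length y} (cyc_pred (length y)) ((!) y)"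
proof unfold_locales
  assume "y \<in> Xc E"
  then have m: "0 < length y" and adm: "\<forall>k<length y. basis_word E sp [y ! cyc_pred (length y) k, y ! k]"
    using Xc_iff_cyclic_adm[of y E sp] by auto
  show "{..<length y} \<noteq> {}" "\<forall>i\<in>{..<length y}. cyc_pred (length y) i \<in> {..<length y}"
    using m cyc_pred_less by auto
  show "inj_on (cyc_pred (length y)) {..<length y}"
    by (rule inj_onI) (metis Suc_cyc_pred_mod lessThan_iff m)
  show "\<forall>i\<in>{..<length y}. basis_word E sp [y ! cyc_pred (length y) i, y ! i]" using adm by simp
  show "\<forall>i\<in>{..<length y}. \<forall>j\<in>{..<length y}. \<exists>n n'. (cyc_pred (length y) ^^ n) i = (cyc_pred (length y) ^^ n') j"
    using funpow_cyc_pred[OF m] by (metis diff_self_eq_0 lessThan_iff order_refl)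
qed

section \<open>Distinguishing the models\<close>

lemma rep_iso_source:
  assumes iso: "rep_iso F phiV phiA G psiV psiA" and wf: "dgraph_wf F"
    and w: "w \<in> verts F" "in_arcs F w = {}"
  shows "\<exists>w'\<in>verts G. in_arcs G w' = {} \<and> psiV w' = phiV w"
proof -
  obtain aV aA where a: "bij_betw aV (verts F) (verts G)" "bij_betw aA (arcs F) (arcs G)"
    "\<forall>f\<in>arcs F. tail G (aA f) = aV (tail F f) \<and> head G (aA f) = aV (head F f)"
    "\<forall>w\<in>verts F. psiV (aV w) = phiV w"
    using iso unfolding rep_iso_def by blast
  have "in_arcs G (aV w) = {}"
  proof (rule ccontr)
    assume "in_arcs G (aV w) \<noteq> {}"
    then obtain g where "g \<in> arcs G" "head G g = aV w" by (auto simp: in_arcs_def)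
    moreover obtain f where "f \<in> arcs F" "g = aA f"
      using a(2) \<open>g \<in> arcs G\<close> by (auto simp: bij_betw_def)
    ultimately have "f \<in> arcs F" "head G (aA f) = aV w" by simp_all
    moreover from this have "head F f \<in> verts F" using wf by (simp add: dgraph_wf_def)
    ultimately have "head F f = w" using a(1,3) w(1) by (auto simp: bij_betw_def inj_on_def)
    then show False using \<open>f \<in> arcs F\<close> w(2) by (auto simp: in_arcs_def)
  qed
  moreover have "aV w \<in> verts G" using a(1) w(1) by (auto simp: bij_betw_def)
  ultimately show ?thesis using a(4) w(1) by blast
qed

lemma Fv_root: "v \<in> V0 E \<Longrightarrow> (v, []) \<in> verts (Fv E sp v) \<and> in_arcs (Fv E sp v) (v, []) = {}"
  using Fv_in_arcs[of v "[]" E sp] by (simp add: Fv_simps mem_Xv_iff)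

lemma Fv_iso_imp_eq:
  assumes "egraph_wf E" "v \<in> V0 E"
    and "rep_iso (Fv E sp v) (Fv_phiV E) Fv_phiA (Fv E sp v') (Fv_phiV E) Fv_phiA"
  shows "v = v'"
proof -
  obtain x where x: "x \<in> verts (Fv E sp v')" "in_arcs (Fv E sp v') x = {}"
      "Fv_phiV E x = Fv_phiV E (v, [])"
    using rep_iso_source[OF assms(3) Fv_wf[OF assms(1,2)]] Fv_root[OF assms(2)] by blast
  obtain u w where "x = (u, w)" by (cases x)
  then have "x = (v', w)" "(v', w) \<in> Xv E sp v'" using x(1) by (simp_all add: Fv_simps mem_Xv_iff)
  then have "x = (v', [])" using x(2) Fv_in_arcs[of v' w E sp] by (simp split: if_splits)
  then show ?thesis using x(3) by (simp add: Fv_phiV_def bp_rng_Pair)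
qed

lemma Fv_not_iso_spine_graph:
  assumes "egraph_wf E" "v \<in> V0 E"
  shows "\<not> rep_iso (Fv E sp v) (Fv_phiV E) Fv_phiA (spine_graph E' sp' I prev lab) (spine_phiV E' lab) (spine_phiA lab)"
proof
  assume "rep_iso (Fv E sp v) (Fv_phiV E) Fv_phiA (spine_graph E' sp' I prev lab) (spine_phiV E' lab) (spine_phiA lab)"
  then obtain w where "w \<in> verts (spine_graph E' sp' I prev lab)" "in_arcs (spine_graph E' sp' I prev lab) w = {}"
    using rep_iso_source[OF _ Fv_wf[OF assms]] Fv_root[OF assms(2)] by blast
  then show False using spine_graph_in_arcs by blast
qed

lemma spine_graph_tail_funpow_length:
  "length (snd ((tail (spine_graph E sp I prev lab) ^^ n) w)) = length (snd w) - n"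
proof (induction n)
  case (Suc n)
  then show ?case by (cases "(tail (spine_graph E sp I prev lab) ^^ n) w") (auto simp: spine_graph_tail)
qed simp

lemma spine_graph_tail_funpow_fst:
  "n \<le> length (snd w) \<Longrightarrow> fst ((tail (spine_graph E sp I prev lab) ^^ n) w) = fst w"
proof (induction n)
  case (Suc n)
  then have "snd ((tail (spine_graph E sp I prev lab) ^^ n) w) \<noteq> []"
    using spine_graph_tail_funpow_length[where n = n and w = w and E = E and sp = sp and I = I
        and prev = prev and lab = lab] by auto
  then show ?case
    using Suc by (cases "(tail (spine_graph E sp I prev lab) ^^ n) w") (simp add: spine_graph_tail)
qed simp

lemma spine_graph_tail_funpow_spine:
  "(tail (spine_graph E sp I prev lab) ^^ n) (i, []) = ((prev ^^ n) i, [])"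
  by (induction n) (simp_all add: spine_graph_tail)

lemma spine_graph_tail_funpow:
  "(tail (spine_graph E sp I prev lab) ^^ (length (snd w) + n)) w = ((prev ^^ n) (fst w), [])"
proof -
  let ?t = "tail (spine_graph E sp I prev lab)"
  have "snd ((?t ^^ length (snd w)) w) = []" "fst ((?t ^^ length (snd w)) w) = fst w"
    using spine_graph_tail_funpow_length[where n = "length (snd w)" and w = w]
      spine_graph_tail_funpow_fst[where n = "length (snd w)" and w = w] by simp_all
  then have "(?t ^^ length (snd w)) w = (fst w, [])" by (metis prod.collapse)
  then have "(?t ^^ (n + length (snd w))) w = ((prev ^^ n) (fst w), [])"
    by (simp add: funpow_add spine_graph_tail_funpow_spine)
  then show ?thesis by (simp add: add.commute)
qed

lemma rep_iso_spine_graphs: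
  assumes "rep_iso (spine_graph E sp I prev lab) (spine_phiV E lab) (spine_phiA lab)
    (spine_graph E' sp' I' prev' lab') (spine_phiV E' lab') (spine_phiA lab')"
  obtains aV where "inj_on aV (verts (spine_graph E sp I prev lab))"
    "\<And>i. i \<in> I \<Longrightarrow> aV (i, []) \<in> verts (spine_graph E' sp' I' prev' lab')"
    "\<And>i. i \<in> I \<Longrightarrow> tail (spine_graph E' sp' I' prev' lab') (aV (i, [])) = aV (prev i, [])"
    "\<And>i. i \<in> I \<Longrightarrow> spine_phiA lab' (aV (i, [])) = lab i"
proof -
  let ?G = "spine_graph E sp I prev lab" and ?G' = "spine_graph E' sp' I' prev' lab'"
  obtain aV aA where a: "bij_betw aV (verts ?G) (verts ?G')" "bij_betw aA (arcs ?G) (arcs ?G')"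
    "\<forall>f\<in>arcs ?G. tail ?G' (aA f) = aV (tail ?G f) \<and> head ?G' (aA f) = aV (head ?G f)"
    "\<forall>f\<in>arcs ?G. spine_phiA lab' (aA f) = spine_phiA lab f"
    using assms unfolding rep_iso_def by blast
  show ?thesis
  proof (rule that)
    show "inj_on aV (verts ?G)" using a(1) by (simp add: bij_betw_def)
    fix i assume "i \<in> I"
    then have v: "(i, []) \<in> verts ?G" by (simp add: spine_graph_verts)
    then show "aV (i, []) \<in> verts ?G'" using a(1) by (auto simp: bij_betw_def)
    show "tail ?G' (aV (i, [])) = aV (prev i, [])"
      using bspec[OF a(3), of "(i, [])"] v by (auto simp: spine_graph_arcs spine_graph_tail)
    show "spine_phiA lab' (aV (i, [])) = lab i"
      using a(3,4) v by (simp add: spine_graph_arcs spine_phiA_Pair)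
  qed
qed

lemma Finf_iso_imp_inf_equiv:
  fixes x x' :: "nat \<Rightarrow> 'b dedge"
  assumes "rep_iso (Finf E sp x) (Finf_phiV E x) (Finf_phiA x) (Finf E' sp' x') (Finf_phiV E' x') (Finf_phiA x')"
  shows "inf_equiv x x'"
proof -
  let ?G' = "spine_graph E' sp' UNIV Suc x'"
  obtain aV where "inj_on aV (verts (spine_graph E sp UNIV Suc x))"
    "\<And>i. i \<in> UNIV \<Longrightarrow> aV (i, []) \<in> verts ?G'"
    "\<And>i. i \<in> UNIV \<Longrightarrow> tail ?G' (aV (i, [])) = aV (Suc i, [])"
    "\<And>i. i \<in> UNIV \<Longrightarrow> spine_phiA x' (aV (i, [])) = x i"
    using rep_iso_spine_graphs[OF assms[unfolded Finf_eq_spine_graph]] by metis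
  then have a: "\<And>i. tail ?G' (aV (i, [])) = aV (Suc i, [])" "\<And>i. spine_phiA x' (aV (i, [])) = x i"
    by simp_all
  let ?w = "aV (0, [])" 
  have walk: "(tail ?G' ^^ n) ?w = aV (n, [])" for n by (induction n) (simp_all add: a(1))
  have "aV (length (snd ?w) + j, []) = (j + fst ?w, [])" for j
    using spine_graph_tail_funpow[of ?w j E' sp' UNIV Suc x'] by (simp add: walk funpow_Suc)
  then have "x (length (snd ?w) + j) = x' (fst ?w + j)" for j
    using a(2)[of "length (snd ?w) + j"] by (simp add: spine_phiA_Pair add.commute)
  then show ?thesis unfolding inf_equiv_def by blast
qed

lemma Finf_not_iso_Fc:
  fixes x :: "nat \<Rightarrow> 'b dedge" and y :: "'b dedge list"
  assumes "y \<noteq> []"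
  shows "\<not> rep_iso (Finf E sp x) (Finf_phiV E x) (Finf_phiA x) (Fc E' sp' y) (Fc_phiV E' y) (Fc_phiA y)"
proof
  let ?m = "length y"
  let ?G' = "spine_graph E' sp' {..<?m} (cyc_pred ?m) ((!) y)"
  assume "rep_iso (Finf E sp x) (Finf_phiV E x) (Finf_phiA x) (Fc E' sp' y) (Fc_phiV E' y) (Fc_phiA y)"
  then obtain aV where "inj_on aV (verts (spine_graph E sp UNIV Suc x))"
    "\<And>i. i \<in> UNIV \<Longrightarrow> aV (i, []) \<in> verts ?G'"
    "\<And>i. i \<in> UNIV \<Longrightarrow> tail ?G' (aV (i, [])) = aV (Suc i, [])"
    using rep_iso_spine_graphs unfolding Finf_eq_spine_graph Fc_eq_spine_graph[OF assms] by metis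
  then have a: "inj_on aV (verts (spine_graph E sp UNIV Suc x))"
    "\<And>i. aV (i, []) \<in> verts ?G'" "\<And>i. tail ?G' (aV (i, [])) = aV (Suc i, [])"
    by simp_all
  let ?w = "aV (0, [])" and ?K = "length (snd (aV (0, [])))"
  have walk: "(tail ?G' ^^ n) ?w = aV (n, [])" for n by (induction n) (simp_all add: a(3))
  have "fst ?w < ?m" using a(2)[of 0] by (cases ?w) (simp add: spine_graph_verts)
  then have "(cyc_pred ?m ^^ ?m) (fst ?w) = fst ?w" using assms funpow_cyc_pred_period by simp
  then have "aV (?K + ?m, []) = aV (?K + 0, [])"
    using spine_graph_tail_funpow[of ?w ?m E' sp' "{..<?m}" "cyc_pred ?m" "(!) y"]
      spine_graph_tail_funpow[of ?w 0 E' sp' "{..<?m}" "cyc_pred ?m" "(!) y"]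
    by (simp add: walk)
  moreover have "(n, []) \<in> verts (spine_graph E sp UNIV Suc x)" for n by (simp add: spine_graph_verts)
  ultimately have "?K + ?m = ?K + 0"
    using inj_onD[OF a(1)] by blast
  then show False using assms by simp
qed

lemma cyc_equiv_iff_rotate: "y' \<noteq> [] \<Longrightarrow> cyc_equiv y y' \<longleftrightarrow> (\<exists>t. y = rotate t y')"
proof
  assume "cyc_equiv y y'"
  then obtain k where k: "1 \<le> k" "k \<le> length y'" "y = drop k y' @ take k y'"
    unfolding cyc_equiv_def by blast
  then show "\<exists>t. y = rotate t y'"
    by (cases "k = length y'") (auto simp: rotate_drop_take intro: exI[of _ 0] exI[of _ k])
next
  assume "y' \<noteq> []" "\<exists>t. y = rotate t y'"
  then obtain t where t: "y = rotate t y'" "0 < length y'" by auto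
  show "cyc_equiv y y'"
  proof (cases "t mod length y' = 0")
    case True
    then show ?thesis using t unfolding cyc_equiv_def
      by (intro exI[of _ "length y'"]) (simp add: rotate_drop_take Suc_leI)
  next
    case False
    then show ?thesis using t unfolding cyc_equiv_def
      by (intro exI[of _ "t mod length y'"]) (simp add: rotate_drop_take Suc_leI)
  qed
qed

lemma cyclic_spine_graph_iso:
  fixes lab lab' :: "nat \<Rightarrow> 'b dedge"
  assumes p: "0 < p" and m: "0 < m"
    and iso: "rep_iso (spine_graph E sp {..<p} (cyc_pred p) lab) (spine_phiV E lab) (spine_phiA lab)
      (spine_graph E' sp' {..<m} (cyc_pred m) lab') (spine_phiV E' lab') (spine_phiA lab')"
  shows "p \<le> m \<and> (\<exists>t. \<forall>k<p. lab k = lab' ((t + k) mod m))"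
proof -
  let ?G' = "spine_graph E' sp' {..<m} (cyc_pred m) lab'"
  obtain aV where a: "inj_on aV (verts (spine_graph E sp {..<p} (cyc_pred p) lab))"
    "\<And>i. i \<in> {..<p} \<Longrightarrow> aV (i, []) \<in> verts ?G'"
    "\<And>i. i \<in> {..<p} \<Longrightarrow> tail ?G' (aV (i, [])) = aV (cyc_pred p i, [])"
    "\<And>i. i \<in> {..<p} \<Longrightarrow> spine_phiA lab' (aV (i, [])) = lab i"
    using rep_iso_spine_graphs[OF iso] by metis
  have walk: "(tail ?G' ^^ n) (aV (k, [])) = aV ((cyc_pred p ^^ n) k, [])" if "k < p" for k n
  proof (induction n)
    case (Suc n)
    have "(cyc_pred p ^^ n) k < p" using p that by (cases n) (simp_all add: cyc_pred_less)
    then show ?case using Suc a(3) by simp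
  qed simp
  have on_spine: "snd (aV (k, [])) = []" if "k < p" for k
  proof -
    have "length (snd (aV (k, []))) = length (snd (aV (k, []))) - p"
      using spine_graph_tail_funpow_length[of p E' sp' "{..<m}" "cyc_pred m" lab' "aV (k, [])"]
        walk[OF that, of p] funpow_cyc_pred_period[OF p that] by simp
    then have "length (snd (aV (k, []))) = 0" using p by arith
    then show ?thesis by simp
  qed
  define t where "t k = fst (aV (k, []))" for k
  have aV_t: "aV (k, []) = (t k, [])" if "k < p" for k
    using on_spine[OF that] unfolding t_def by (metis prod.collapse)
  have t_less: "t k < m" if "k < p" for k
    using a(2)[of k] aV_t[OF that] that by (simp add: spine_graph_verts)
  have t_pred: "cyc_pred m (t k) = t (cyc_pred p k)" if "k < p" for k
    using a(3)[of k] aV_t[OF that] aV_t[OF cyc_pred_less[OF p]] that by (simp add: spine_graph_tail)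
  have inj_t: "inj_on t {..<p}"
  proof (rule inj_onI)
    fix k k' assume "k \<in> {..<p}" "k' \<in> {..<p}" "t k = t k'"
    then have "aV (k, []) = aV (k', [])" using aV_t by simp
    moreover have "(k, []) \<in> verts (spine_graph E sp {..<p} (cyc_pred p) lab)"
      "(k', []) \<in> verts (spine_graph E sp {..<p} (cyc_pred p) lab)"
      using \<open>k \<in> {..<p}\<close> \<open>k' \<in> {..<p}\<close> by (simp_all add: spine_graph_verts)
    ultimately have "(k, []) = (k', [])" using a(1) by (auto dest: inj_onD)
    then show "k = k'" by simp
  qed
  have "t ` {..<p} \<subseteq> {..<m}" using t_less by auto
  then have "p \<le> m" using card_inj_on_le[OF inj_t _ finite_lessThan] by simp
  moreover have t_shift: "t k = (t 0 + k) mod m" if "k < p" for k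
    using that
  proof (induction k)
    case (Suc k)
    have "t (Suc k) = Suc (cyc_pred m (t (Suc k))) mod m"
      using Suc_cyc_pred_mod[OF m t_less[OF Suc.prems]] by simp
    also have "\<dots> = Suc (t k) mod m"
      using t_pred[OF Suc.prems] cyc_pred_Suc_mod[OF p, of k] Suc.prems p by simp
    finally show ?case using Suc by (simp add: mod_Suc_eq)
  qed (use t_less p in simp)
  moreover have "lab k = lab' ((t 0 + k) mod m)" if "k < p" for k
    using a(4)[of k] aV_t[OF that] t_shift[OF that] that by (simp add: spine_phiA_Pair)
  ultimately show ?thesis by blast
qed

lemma Fc_iso_imp_cyc_equiv:
  assumes "egraph_wf E" "y \<in> Xc E" "y' \<in> Xc E"
    and iso: "rep_iso (Fc E sp y) (Fc_phiV E y) (Fc_phiA y) (Fc E sp y') (Fc_phiV E y') (Fc_phiA y')"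
  shows "cyc_equiv y y'"
proof -
  have ne: "y \<noteq> []" "y' \<noteq> []" using assms(2,3) by (auto simp: Xc_def dpath_def)
  have wf: "dgraph_wf (Fc E sp y)"
    using spine.wf[OF spine_Fc[OF assms(1,2)]] Fc_eq_spine_graph(1)[OF ne(1), of E sp] by simp
  note iso' = iso[unfolded Fc_eq_spine_graph[OF ne(1)] Fc_eq_spine_graph[OF ne(2)]]
  note iso'' = rep_iso_sym[OF iso wf, unfolded Fc_eq_spine_graph[OF ne(1)] Fc_eq_spine_graph[OF ne(2)]]
  obtain t where "length y \<le> length y'" "\<forall>k<length y. y ! k = y' ! ((t + k) mod length y')"
    using cyclic_spine_graph_iso[OF _ _ iso'] ne by auto
  moreover have "length y' \<le> length y" using cyclic_spine_graph_iso[OF _ _ iso''] ne by auto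
  ultimately have "y = rotate t y'" by (auto intro: nth_equalityI simp: nth_rotate)
  then show ?thesis using cyc_equiv_iff_rotate ne by blast
qed

section \<open>Classification\<close>

definition parent :: "('v,'e) dgraph \<Rightarrow> 'v \<Rightarrow> 'v" where
  "parent F v = tail F (THE f. f \<in> in_arcs F v)"

lemma parent_eq: "in_arcs F v = {f} \<Longrightarrow> parent F v = tail F f"
  by (simp add: parent_def)

lemma spine_in_Suc_funpow_parent:
  assumes "spine_in F phiA UNIV Suc a S"
  shows "S (n + k) = (parent F ^^ k) (S n)"
proof (induction k)
  case (Suc k)
  obtain f where "in_arcs F (S (n + k)) = {f}" "tail F f = S (Suc (n + k))"
    using assms by (auto simp: spine_in_def)
  then show ?case using Suc by (simp add: parent_eq)
qed simp

context rep_graph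
begin

lemma spine_in_adm:
  assumes "spine_in F phiA I prev lab S" "i \<in> I" "prev i \<in> I"
  shows "basis_word E sp [lab (prev i), lab i]"
proof -
  obtain f where f: "in_arcs F (S i) = {f}" "tail F f = S (prev i)" "phiA f = lab i"
    using assms(1,2) by (auto simp: spine_in_def)
  obtain g where g: "in_arcs F (S (prev i)) = {g}" "phiA g = lab (prev i)" and "S (prev i) \<in> verts F"
    using assms(1,3) by (auto simp: spine_in_def)
  have "f \<in> out_arcs F (S (prev i))" using f by (auto simp: in_arcs_def out_arcs_def)
  then have "phiA f \<in> out_labels E sp F phiV phiA (S (prev i))"
    using out_arc_label \<open>S (prev i) \<in> verts F\<close> by blast
  then show ?thesis using f g by (simp add: out_labels_def)
qed

lemma backward_ray:
  assumes "u \<in> verts F" and no_source: "\<forall>v\<in>verts F. in_arcs F v \<noteq> {}"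
  shows "\<exists>a S. spine_in F phiA UNIV Suc a S"
proof -
  define S where "S k = (parent F ^^ k) u" for k
  have in_arc: "\<exists>f. in_arcs F v = {f} \<and> parent F v = tail F f \<and> parent F v \<in> verts F" if "v \<in> verts F" for v
    using in_arcs_cases[OF that] no_source that arc parent_eq by (fastforce simp: in_arcs_def)
  have S_verts: "S k \<in> verts F" for k
    by (induction k) (use assms(1) in_arc in \<open>auto simp: S_def\<close>)
  define a where "a k = phiA (THE f. f \<in> in_arcs F (S k))" for k
  have "\<exists>f. in_arcs F (S k) = {f} \<and> tail F f = S (Suc k) \<and> phiA f = a k" for k
    using in_arc[OF S_verts[of k]] by (auto simp: S_def a_def)
  then show ?thesis using S_verts unfolding spine_in_def by blast
qed

end

lemma Suc_minus_mod_eq: "0 < p \<Longrightarrow> k < p \<Longrightarrow> Suc ((p - k) mod p) mod p = (p - cyc_pred p k) mod p"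
  by (cases k) (simp_all add: cyc_pred_eq Suc_diff_Suc)

lemma periodic_ray_cycle:
  assumes ray: "spine_in F phiA UNIV Suc a S" and "\<not> inj S"
  obtains y cv where "y \<noteq> []" "inj_on cv {..<length y}"
    "spine_in F phiA {..<length y} (cyc_pred (length y)) ((!) y) cv"
proof -
  have shift: "S (m + k) = S (n + k)" if "S m = S n" for m n k
    using spine_in_Suc_funpow_parent[OF ray] that by metis
  obtain i j where "i < j" "S i = S j"
  proof -
    obtain m n where "m \<noteq> n" "S m = S n" using \<open>\<not> inj S\<close> unfolding inj_def by blast
    then show ?thesis using that[of "min m n" "max m n"] by (cases "m < n") (auto simp: min_def max_def)
  qed
  define p where "p = (LEAST q. 0 < q \<and> S (i + q) = S i)"
  have "0 < j - i \<and> S (i + (j - i)) = S i" using \<open>i < j\<close> \<open>S i = S j\<close> by simp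
  then have p: "0 < p" "S (i + p) = S i" unfolding p_def by (metis (mono_tags, lifting) LeastI)+
  have minimal: "S (i + q) \<noteq> S i" if "0 < q" "q < p" for q
    using that not_less_Least unfolding p_def by blast
  have period: "S (i + (p * q + r)) = S (i + r)" for q r
  proof (induction q)
    case (Suc q)
    have "S (i + (p * Suc q + r)) = S (i + p + (p * q + r))" by (simp add: algebra_simps)
    also have "\<dots> = S (i + (p * q + r))" using shift[OF p(2)] by simp
    finally show ?case using Suc by simp
  qed simp
  have period_mod: "S (i + n) = S (i + n mod p)" for n
    using period[of "n div p" "n mod p"] by simp
  have distinct: "s = s'" if ss': "s < p" "s' < p" "S (i + s) = S (i + s')" for s s'
  proof (rule ccontr)
    assume "s \<noteq> s'"
    then have "s < s' \<or> s' < s" by arith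
    then obtain s1 s2 where s: "s1 < s2" "s2 < p" "S (i + s1) = S (i + s2)"
      using ss' by (elim disjE) (blast, metis)
    then have "S (i + s1 + (p - s2)) = S (i + s2 + (p - s2))" using shift by blast
    moreover have "i + s2 + (p - s2) = i + p" "i + s1 + (p - s2) = i + (s1 + (p - s2))" using s by simp_all
    ultimately have "S (i + (s1 + (p - s2))) = S i" using p(2) by simp
    moreover have "0 < s1 + (p - s2)" "s1 + (p - s2) < p" using s(1,2) by auto
    ultimately show False using minimal[of "s1 + (p - s2)"] by simp
  qed
  txt \<open>The ray is periodic from i with least period p; read backwards from S i it is the cycle.\<close>
  define y where "y = map (\<lambda>k. a (i + (p - k) mod p)) [0..<p]"
  define cv where "cv k = S (i + (p - k) mod p)" for k
  have "length y = p" by (simp add: y_def)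
  moreover have "inj_on cv {..<p}"
  proof (rule inj_onI)
    fix k k' assume "k \<in> {..<p}" "k' \<in> {..<p}" "cv k = cv k'"
    then have "(p - k) mod p = (p - k') mod p" using distinct p(1) by (simp add: cv_def)
    then show "k = k'" using \<open>k \<in> {..<p}\<close> \<open>k' \<in> {..<p}\<close> by (auto simp: mod_if split: if_splits)
  qed
  moreover have "spine_in F phiA {..<p} (cyc_pred p) ((!) y) cv"
    unfolding spine_in_def
  proof
    fix k assume "k \<in> {..<p}"
    then have "S (Suc (i + (p - k) mod p)) = cv (cyc_pred p k)"
      using period_mod[of "Suc ((p - k) mod p)"] Suc_minus_mod_eq[OF p(1)] by (simp add: cv_def)
    moreover obtain f where "cv k \<in> verts F" "in_arcs F (cv k) = {f}"
      "tail F f = S (Suc (i + (p - k) mod p))" "phiA f = a (i + (p - k) mod p)"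
      using ray unfolding spine_in_def cv_def by blast
    moreover have "y ! k = a (i + (p - k) mod p)" using \<open>k \<in> {..<p}\<close> by (simp add: y_def)
    ultimately show "cv k \<in> verts F \<and> (\<exists>f. in_arcs F (cv k) = {f} \<and> tail F f = cv (cyc_pred p k) \<and> phiA f = y ! k)"
      by auto
  qed
  ultimately show ?thesis using that p(1) by auto
qed

lemma rotate_inverse: "y = rotate t z \<Longrightarrow> z = rotate (length z - t mod length z) y"
proof (cases "z = []")
  case False
  assume "y = rotate t z"
  then have "rotate (length z - t mod length z) y = rotate (length z - t mod length z + t) z"
    by (simp add: rotate_rotate)
  moreover have "(length z - t mod length z + t) mod length z = 0"
  proof -
    have "t mod length z < length z" using False by simp
    moreover have "length z * (t div length z) + t mod length z = t" by (rule mult_div_mod_eq)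
    ultimately have "length z - t mod length z + t = length z + length z * (t div length z)" by arith
    then show ?thesis by simp
  qed
  ultimately show ?thesis by simp
qed simp

lemma spine_in_rotate:
  assumes cyc: "spine_in F phiA {..<length y} (cyc_pred (length y)) ((!) y) cv"
    and inj: "inj_on cv {..<length y}" and "y \<noteq> []"
  shows "spine_in F phiA {..<length y} (cyc_pred (length y)) ((!) (rotate t y)) (\<lambda>k. cv ((k + t) mod length y))"
    "inj_on (\<lambda>k. cv ((k + t) mod length y)) {..<length y}"
proof -
  let ?p = "length y"
  have p: "0 < ?p" using \<open>y \<noteq> []\<close> by simp
  show "spine_in F phiA {..<?p} (cyc_pred ?p) ((!) (rotate t y)) (\<lambda>k. cv ((k + t) mod ?p))"
    unfolding spine_in_def
  proof
    fix k assume "k \<in> {..<?p}"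
    have "(k + t) mod ?p \<in> {..<?p}" using p by simp
    then have "cv ((k + t) mod ?p) \<in> verts F \<and> (\<exists>f. in_arcs F (cv ((k + t) mod ?p)) = {f} \<and>
        tail F f = cv (cyc_pred ?p ((k + t) mod ?p)) \<and> phiA f = y ! ((k + t) mod ?p))"
      using cyc unfolding spine_in_def by blast
    moreover have "y ! ((k + t) mod ?p) = rotate t y ! k"
      using \<open>k \<in> {..<?p}\<close> by (simp add: nth_rotate add.commute)
    ultimately show "cv ((k + t) mod ?p) \<in> verts F \<and> (\<exists>f. in_arcs F (cv ((k + t) mod ?p)) = {f} \<and>
        tail F f = cv ((cyc_pred ?p k + t) mod ?p) \<and> phiA f = rotate t y ! k)"
      using cyc_pred_add_mod[OF p, of k t] by simp
  qed
  show "inj_on (\<lambda>k. cv ((k + t) mod ?p)) {..<?p}"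
  proof (rule inj_onI)
    fix k k' assume k: "k \<in> {..<?p}" "k' \<in> {..<?p}" and "cv ((k + t) mod ?p) = cv ((k' + t) mod ?p)"
    then have "(k + t) mod ?p = (k' + t) mod ?p" using inj p by (simp add: inj_on_def)
    then have "k mod ?p = k' mod ?p" by (simp add: nat_mod_eq_iff)
    then show "k = k'" using k by simp
  qed
qed

lemma Finf_iso_shift:
  assumes "egraph_wf E" "z \<in> Xinf E sp"
  shows "rep_iso (Finf E sp z) (Finf_phiV E z) (Finf_phiA z)
    (spine_graph E sp UNIV Suc (\<lambda>k. z (n + k))) (spine_phiV E (\<lambda>k. z (n + k))) (spine_phiA (\<lambda>k. z (n + k)))"
proof -
  interpret Z: spine E sp UNIV Suc z by (rule spine_Finf[OF assms])
  interpret Z: spine_rep_graph E sp "spine_graph E sp UNIV Suc z" "spine_phiV E z" "spine_phiA z"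
    UNIV Suc "\<lambda>k. z (n + k)" "\<lambda>k. (n + k, [])"
  proof unfold_locales
    show "spine_in (spine_graph E sp UNIV Suc z) (spine_phiA z) UNIV Suc (\<lambda>k. z (n + k)) (\<lambda>k. (n + k, []))"
      unfolding spine_in_def
    proof
      fix i :: nat
      have v: "(n + i, []) \<in> verts (spine_graph E sp UNIV Suc z)" by (simp add: spine_graph_verts)
      then show "(n + i, []) \<in> verts (spine_graph E sp UNIV Suc z) \<and>
          (\<exists>f. in_arcs (spine_graph E sp UNIV Suc z) (n + i, []) = {f} \<and>
            tail (spine_graph E sp UNIV Suc z) f = (n + Suc i, []) \<and> spine_phiA z f = z (n + i))"
        using spine_graph_in_arcs[OF v] by (simp add: spine_graph_tail spine_phiA_Pair)
    qed
  qed (use Z.ne_conn_erg in \<open>auto simp: ne_conn_erg_def inj_on_def\<close>)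
  show ?thesis using Z.iso_spine_graph unfolding Finf_eq_spine_graph .
qed

context rep_graph
begin

lemma iso_Finf_of_ray:
  assumes "egraph_wf E" "dg_connected F"
    and ray: "spine_in F phiA UNIV Suc a S" "inj S"
    and R: "R \<subseteq> Xinf E sp" "\<forall>x\<in>Xinf E sp. \<exists>!z. z \<in> R \<and> inf_equiv x z"
  shows "\<exists>x\<in>R. rep_iso F phiV phiA (Finf E sp x) (Finf_phiV E x) (Finf_phiA x)"
proof -
  have "a \<in> Xinf E sp" using spine_in_adm[OF ray(1)] unfolding Xinf_iff by simp
  then obtain z m n where z: "z \<in> R" "\<forall>k. a (m + k) = z (n + k)"
    using R unfolding inf_equiv_def by blast
  txt \<open>Both F and F_z are recognised as the spine graph of the common tail ?z of a and z.\<close>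
  let ?z = "\<lambda>k. z (n + k)"
  have "inj (\<lambda>k. S (m + k))" by (rule injI) (simp add: inj_eq[OF ray(2)])
  interpret F: spine_rep_graph E sp F phiV phiA UNIV Suc ?z "\<lambda>k. S (m + k)"
  proof unfold_locales
    show "spine_in F phiA UNIV Suc ?z (\<lambda>k. S (m + k))"
      unfolding spine_in_def
    proof
      fix i :: nat
      show "S (m + i) \<in> verts F \<and>
          (\<exists>f. in_arcs F (S (m + i)) = {f} \<and> tail F f = S (m + Suc i) \<and> phiA f = ?z i)"
      proof -
        obtain f where "S (m + i) \<in> verts F" "in_arcs F (S (m + i)) = {f}"
          "tail F f = S (Suc (m + i))" "phiA f = a (m + i)"
          using ray(1) unfolding spine_in_def by blast
        then show ?thesis using z(2) by auto
      qed
    qed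
  qed (use assms(2) \<open>inj (\<lambda>k. S (m + k))\<close> in auto)
  have "z \<in> Xinf E sp" using z(1) R(1) by blast
  then have "rep_iso (spine_graph E sp UNIV Suc ?z) (spine_phiV E ?z) (spine_phiA ?z)
      (Finf E sp z) (Finf_phiV E z) (Finf_phiA z)"
    using rep_iso_sym[OF Finf_iso_shift[OF assms(1)]] spine.wf[OF spine_Finf[OF assms(1)]]
    unfolding Finf_eq_spine_graph by blast
  then show ?thesis using rep_iso_trans[OF F.iso_spine_graph] z(1) by blast
qed

lemma iso_Fc_of_cycle:
  assumes "egraph_wf E" "dg_connected F"
    and cyc: "spine_in F phiA {..<length y} (cyc_pred (length y)) ((!) y) cv"
      "inj_on cv {..<length y}" "y \<noteq> []"
    and S: "S \<subseteq> Xc E" "\<forall>x\<in>Xc E. \<exists>!z. z \<in> S \<and> cyc_equiv x z"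
  shows "\<exists>z\<in>S. rep_iso F phiV phiA (Fc E sp z) (Fc_phiV E z) (Fc_phiA z)"
proof -
  let ?p = "length y"
  have "y \<in> Xc E"
    unfolding Xc_iff_cyclic_adm[where sp = sp]
    using spine_in_adm[OF cyc(1)] cyc(3) cyc_pred_less[of ?p] by auto
  then obtain z where z: "z \<in> S" "cyc_equiv y z" using S(2) by blast
  moreover have "z \<noteq> []" using z(1) S(1) by (auto simp: Xc_def dpath_def)
  ultimately obtain t where "y = rotate t z" using cyc_equiv_iff_rotate by blast
  then obtain t' where zy: "z = rotate t' y" using rotate_inverse by blast
  interpret F: spine_rep_graph E sp F phiV phiA "{..<?p}" "cyc_pred ?p" "(!) z" "\<lambda>k. cv ((k + t') mod ?p)"
    using spine_in_rotate[OF cyc] assms(2) cyc(3) cyc_pred_less[of ?p] zy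
    by unfold_locales auto
  have "length z = ?p" using zy by simp
  then have "rep_iso F phiV phiA (Fc E sp z) (Fc_phiV E z) (Fc_phiA z)"
    using F.iso_spine_graph by (simp add: Fc_eq_spine_graph[OF \<open>z \<noteq> []\<close>])
  then show ?thesis using z(1) by blast
qed

end

theorem ne_conn_erg_classification:
  fixes F :: "('v,'e) dgraph"
  assumes wfE: "egraph_wf E" and F: "ne_conn_erg E sp F phiV phiA"
    and R: "R \<subseteq> Xinf E sp" "\<forall>x\<in>Xinf E sp. \<exists>!z. z \<in> R \<and> inf_equiv x z"
    and S: "S \<subseteq> Xc E" "\<forall>x\<in>Xc E. \<exists>!z. z \<in> S \<and> cyc_equiv x z"
  shows "(\<exists>v\<in>V0 E. rep_iso F phiV phiA (Fv E sp v) (Fv_phiV E) Fv_phiA) \<or>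
    (\<exists>x\<in>R. rep_iso F phiV phiA (Finf E sp x) (Finf_phiV E x) (Finf_phiA x)) \<or>
    (\<exists>y\<in>S. rep_iso F phiV phiA (Fc E sp y) (Fc_phiV E y) (Fc_phiA y))"
proof -
  interpret rep_graph E sp F phiV phiA using F by unfold_locales (simp add: ne_conn_erg_def)
  have connected: "dg_connected F" and "verts F \<noteq> {}" using F by (auto simp: ne_conn_erg_def)
  show ?thesis
  proof (cases "\<exists>r\<in>verts F. in_arcs F r = {}")
    case True
    then obtain r where "r \<in> verts F" "in_arcs F r = {}" by blast
    then interpret rooted_rep_graph E sp F phiV phiA r by unfold_locales (use connected in auto)
    show ?thesis using iso_Fv phiV_in_V0[OF root_in_verts] by blast
  next
    case False
    then obtain a u where ray: "spine_in F phiA UNIV Suc a u"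
      using backward_ray \<open>verts F \<noteq> {}\<close> by blast
    show ?thesis
    proof (cases "inj u")
      case True
      then show ?thesis using iso_Finf_of_ray[OF wfE connected ray True R] by blast
    next
      case False
      then obtain y cv where "y \<noteq> []" "inj_on cv {..<length y}"
        "spine_in F phiA {..<length y} (cyc_pred (length y)) ((!) y) cv"
        using periodic_ray_cycle[OF ray] by blast
      then show ?thesis using iso_Fc_of_cycle[OF wfE connected _ _ _ S] by blast
    qed
  qed
qed

theorem theorem5p17:
  fixes E :: "('a,'b) egraph" and sp :: "'a \<Rightarrow> 'b"
    and R :: "(nat \<Rightarrow> 'b dedge) set" and S :: "'b dedge list set"
  assumes "egraph_wf E" and "row_finite E" and "special_choice E sp"
    and "R \<subseteq> Xinf E sp" and "\<forall>x\<in>Xinf E sp. \<exists>!z. z \<in> R \<and> inf_equiv x z"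
    and "S \<subseteq> Xc E" and "\<forall>x\<in>Xc E. \<exists>!z. z \<in> S \<and> cyc_equiv x z"
  shows
    "(\<forall>v\<in>V0 E. ne_conn_erg E sp (Fv E sp v) (Fv_phiV E) Fv_phiA) \<and>
     (\<forall>x\<in>R. ne_conn_erg E sp (Finf E sp x) (Finf_phiV E x) (Finf_phiA x)) \<and>
     (\<forall>y\<in>S. ne_conn_erg E sp (Fc E sp y) (Fc_phiV E y) (Fc_phiA y)) \<and>
     (\<forall>(F :: ('v,'e) dgraph) phiV phiA. ne_conn_erg E sp F phiV phiA \<longrightarrow>
        (\<exists>v\<in>V0 E. rep_iso F phiV phiA (Fv E sp v) (Fv_phiV E) Fv_phiA) \<or>
        (\<exists>x\<in>R. rep_iso F phiV phiA (Finf E sp x) (Finf_phiV E x) (Finf_phiA x)) \<or>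
        (\<exists>y\<in>S. rep_iso F phiV phiA (Fc E sp y) (Fc_phiV E y) (Fc_phiA y))) \<and>
     (\<forall>v\<in>V0 E. \<forall>v'\<in>V0 E.
        rep_iso (Fv E sp v) (Fv_phiV E) Fv_phiA (Fv E sp v') (Fv_phiV E) Fv_phiA \<longrightarrow> v = v') \<and>
     (\<forall>x\<in>R. \<forall>x'\<in>R.
        rep_iso (Finf E sp x) (Finf_phiV E x) (Finf_phiA x) (Finf E sp x') (Finf_phiV E x') (Finf_phiA x')
        \<longrightarrow> x = x') \<and>
     (\<forall>y\<in>S. \<forall>y'\<in>S.
        rep_iso (Fc E sp y) (Fc_phiV E y) (Fc_phiA y) (Fc E sp y') (Fc_phiV E y') (Fc_phiA y')
        \<longrightarrow> y = y') \<and>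
     (\<forall>v\<in>V0 E. \<forall>x\<in>R.
        \<not> rep_iso (Fv E sp v) (Fv_phiV E) Fv_phiA (Finf E sp x) (Finf_phiV E x) (Finf_phiA x)) \<and>
     (\<forall>v\<in>V0 E. \<forall>y\<in>S.
        \<not> rep_iso (Fv E sp v) (Fv_phiV E) Fv_phiA (Fc E sp y) (Fc_phiV E y) (Fc_phiA y)) \<and>
     (\<forall>x\<in>R. \<forall>y\<in>S.
        \<not> rep_iso (Finf E sp x) (Finf_phiV E x) (Finf_phiA x) (Fc E sp y) (Fc_phiV E y) (Fc_phiA y))"
proof (intro conjI ballI allI impI)
  note wf = assms(1) and R = assms(4,5) and S = assms(6,7)
  have S_not_Nil: "y \<noteq> []" if "y \<in> S" for y using that S(1) by (auto simp: Xc_def dpath_def)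
  show "ne_conn_erg E sp (Fv E sp v) (Fv_phiV E) Fv_phiA" if "v \<in> V0 E" for v
    using Fv_ne_conn_erg[OF wf that] .
  show "ne_conn_erg E sp (Finf E sp x) (Finf_phiV E x) (Finf_phiA x)" if "x \<in> R" for x
    using spine.ne_conn_erg[OF spine_Finf[OF wf]] that R(1) by (auto simp: Finf_eq_spine_graph)
  show "ne_conn_erg E sp (Fc E sp y) (Fc_phiV E y) (Fc_phiA y)" if "y \<in> S" for y
    using spine.ne_conn_erg[OF spine_Fc[OF wf]] that S(1)
    by (auto simp: Fc_eq_spine_graph[OF S_not_Nil[OF that]])
  show "(\<exists>v\<in>V0 E. rep_iso F phiV phiA (Fv E sp v) (Fv_phiV E) Fv_phiA) \<or>
      (\<exists>x\<in>R. rep_iso F phiV phiA (Finf E sp x) (Finf_phiV E x) (Finf_phiA x)) \<or>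
      (\<exists>y\<in>S. rep_iso F phiV phiA (Fc E sp y) (Fc_phiV E y) (Fc_phiA y))"
    if "ne_conn_erg E sp F phiV phiA" for F :: "('v,'e) dgraph" and phiV phiA
    using ne_conn_erg_classification[OF wf that R S] .
  show "v = v'" if "v \<in> V0 E"
    "rep_iso (Fv E sp v) (Fv_phiV E) Fv_phiA (Fv E sp v') (Fv_phiV E) Fv_phiA" for v v'
    using Fv_iso_imp_eq[OF wf that] .
  show "x = x'" if "x \<in> R" "x' \<in> R"
    "rep_iso (Finf E sp x) (Finf_phiV E x) (Finf_phiA x) (Finf E sp x') (Finf_phiV E x') (Finf_phiA x')"
    for x x'
  proof -
    have "inf_equiv x x'" "inf_equiv x x" "x \<in> Xinf E sp"
      using Finf_iso_imp_inf_equiv[OF that(3)] that(1) R(1) by (auto simp: inf_equiv_def)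
    then show ?thesis using R(2) that(1,2) by blast
  qed
  show "y = y'" if "y \<in> S" "y' \<in> S"
    "rep_iso (Fc E sp y) (Fc_phiV E y) (Fc_phiA y) (Fc E sp y') (Fc_phiV E y') (Fc_phiA y')"
    for y y'
  proof -
    have "cyc_equiv y y'" "cyc_equiv y y" "y \<in> Xc E"
      using Fc_iso_imp_cyc_equiv[OF wf _ _ that(3)] cyc_equiv_iff_rotate[of y y] that S(1) S_not_Nil
      by (auto intro: exI[of _ 0])
    then show ?thesis using S(2) that(1,2) by blast
  qed
  show "\<not> rep_iso (Fv E sp v) (Fv_phiV E) Fv_phiA (Finf E sp x) (Finf_phiV E x) (Finf_phiA x)"
    if "v \<in> V0 E" for v x
    using Fv_not_iso_spine_graph[OF wf that] by (simp add: Finf_eq_spine_graph)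
  show "\<not> rep_iso (Fv E sp v) (Fv_phiV E) Fv_phiA (Fc E sp y) (Fc_phiV E y) (Fc_phiA y)"
    if "v \<in> V0 E" "y \<in> S" for v y
    using Fv_not_iso_spine_graph[OF wf that(1)] by (simp add: Fc_eq_spine_graph[OF S_not_Nil[OF that(2)]])
  show "\<not> rep_iso (Finf E sp x) (Finf_phiV E x) (Finf_phiA x) (Fc E sp y) (Fc_phiV E y) (Fc_phiA y)"
    if "y \<in> S" for x y
    using Finf_not_iso_Fc[OF S_not_Nil[OF that]] .
qed

end
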